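(* Let $T^\sigma=(T,\sigma)$ be a signed tree, where $T$ is not a path, such that every special exterior major vertex $t_k$ of $T^\sigma$ satisfies $\mathrm{ter}(t_k)\neq 2$. Then $\dim(T^\sigma)=\dim(T)-|\eta(T^\sigma)|$, i.e. $\mathrm{mdd}(T^\sigma)=|\eta(T^\sigma)|$.
   Context: A signed graph $\Sigma=(G,\sigma)$ consists of a finite simple connected graph $G=(V,E)$ and a signature $\sigma:E\to\{+1,-1\}$. In a signed tree every pair of vertices $u,v$ is joined by a unique path $P(u,v)$, and the signed distance is $d_\Sigma(u,v)=\sigma(P(u,v))\,d(u,v)$, where $d$ is the usual distance and $\sigma(P)$ is the product of edge signs of $P$. For an ordered subset $W=(w_1,\dots,w_k)$ of vertices, $r_\Sigma(v|W)=(d_\Sigma(v,w_1),\dots,d_\Sigma(v,w_k))$; $W$ is a resolving set if distinct vertices have distinct representations; $\dim(T^\sigma)$ is the minimum size of a resolving set, and $\dim(T)$ is defined analogously for the unsigned tree using $d$. The metric dimensional difference is $\mathrm{mdd}(T^\sigma)=\dim(T)-\dim(T^\sigma)$. Tree terminology: a leaf is a vertex of degree $1$; a major vertex is a vertex of degree at least $3$; a leaf $u$ is a terminal vertex of a major vertex $v$ if $d(u,v)<d(u,w)$ for every other major vertex $w$; the terminal degree $\mathrm{ter}(v)$ is the number of terminal vertices of $v$; an exterior major vertex is a major vertex with positive terminal degree. A leg of an exterior major vertex $t_k$ is the path from $t_k$ to one of its terminal vertices; $L_{k,j}$ is the set of vertices (other than $t_k$) on the $j$-th leg of $t_k$, and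 a vertex $u\in L_{k,j}$ has index $i$ if $d(t_k,u)=i$. An exterior major vertex $t_k$ is special if there are two distinct legs $L_{k,n}$, $L_{k,m}$ of $t_k$ such that for every index $i$, whenever $u_i\in L_{k,n}$ and $v_i\in L_{k,m}$ both have index $i$, one has $d_\Sigma(t_k,u_i)\neq d_\Sigma(t_k,v_i)$ (i.e. the paths from $t_k$ to $u_i$ and to $v_i$ have opposite signs). $\eta(T^\sigma)$ denotes the set of special exterior major vertices. *)

theory Defs
  imports Main
begin

definition simple_graph :: "'a set \<Rightarrow> 'a set set \<Rightarrow> bool" where
  "simple_graph V E \<longleftrightarrow> finite V \<and>
     (\<forall>e\<in>E. \<exists>u v. e = {u, v} \<and> u \<noteq> v \<and> u \<in> V \<and> v \<in> V)"

definition is_gpath :: "'a set \<Rightarrow> 'a set set \<Rightarrow> 'a list \<Rightarrow> 'a \<Rightarrow> 'a \<Rightarrow> bool" where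
  "is_gpath V E xs u v \<longleftrightarrow> xs \<noteq> [] \<and> hd xs = u \<and> last xs = v \<and> distinct xs \<and>
     set xs \<subseteq> V \<and> (\<forall>i. Suc i < length xs \<longrightarrow> {xs ! i, xs ! Suc i} \<in> E)"

definition tree :: "'a set \<Rightarrow> 'a set set \<Rightarrow> bool" where
  "tree V E \<longleftrightarrow> simple_graph V E \<and> V \<noteq> {} \<and>
     (\<forall>u\<in>V. \<forall>v\<in>V. \<exists>!xs. is_gpath V E xs u v)"

definition is_path_graph :: "'a set \<Rightarrow> 'a set set \<Rightarrow> bool" where
  "is_path_graph V E \<longleftrightarrow> (\<exists>xs. distinct xs \<and> set xs = V \<and>
     E = {{xs ! i, xs ! Suc i} | i. Suc i < length xs})"

definition tpath :: "'a set \<Rightarrow> 'a set set \<Rightarrow> 'a \<Rightarrow> 'a \<Rightarrow> 'a list" where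
  "tpath V E u v = (THE xs. is_gpath V E xs u v)"

definition tdist :: "'a set \<Rightarrow> 'a set set \<Rightarrow> 'a \<Rightarrow> 'a \<Rightarrow> nat" where
  "tdist V E u v = length (tpath V E u v) - 1"

definition signature :: "'a set set \<Rightarrow> ('a set \<Rightarrow> int) \<Rightarrow> bool" where
  "signature E \<sigma> \<longleftrightarrow> (\<forall>e\<in>E. \<sigma> e = 1 \<or> \<sigma> e = -1)"

definition path_sign :: "('a set \<Rightarrow> int) \<Rightarrow> 'a list \<Rightarrow> int" where
  "path_sign \<sigma> xs = prod_list (map (\<lambda>i. \<sigma> {xs ! i, xs ! Suc i}) [0..<length xs - 1])"

definition sdist :: "'a set \<Rightarrow> 'a set set \<Rightarrow> ('a set \<Rightarrow> int) \<Rightarrow> 'a \<Rightarrow> 'a \<Rightarrow> int" where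
  "sdist V E \<sigma> u v = path_sign \<sigma> (tpath V E u v) * int (tdist V E u v)"

text \<open>Resolving sets and metric dimension w.r.t. a distance function d.
  Representations r(v|W) of distinct vertices differ iff they differ at some w in W.\<close>
definition resolving :: "'a set \<Rightarrow> ('a \<Rightarrow> 'a \<Rightarrow> int) \<Rightarrow> 'a set \<Rightarrow> bool" where
  "resolving V d W \<longleftrightarrow> W \<subseteq> V \<and>
     (\<forall>u\<in>V. \<forall>v\<in>V. u \<noteq> v \<longrightarrow> (\<exists>w\<in>W. d u w \<noteq> d v w))"

definition metric_dim :: "'a set \<Rightarrow> ('a \<Rightarrow> 'a \<Rightarrow> int) \<Rightarrow> nat" where
  "metric_dim V d = Min {card W | W. resolving V d W}"

definition dim_tree :: "'a set \<Rightarrow> 'a set set \<Rightarrow> nat" where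
  "dim_tree V E = metric_dim V (\<lambda>u v. int (tdist V E u v))"

definition dim_signed :: "'a set \<Rightarrow> 'a set set \<Rightarrow> ('a set \<Rightarrow> int) \<Rightarrow> nat" where
  "dim_signed V E \<sigma> = metric_dim V (sdist V E \<sigma>)"

definition degree :: "'a set \<Rightarrow> 'a set set \<Rightarrow> 'a \<Rightarrow> nat" where
  "degree V E v = card {u \<in> V. {u, v} \<in> E}"

definition leaf :: "'a set \<Rightarrow> 'a set set \<Rightarrow> 'a \<Rightarrow> bool" where
  "leaf V E v \<longleftrightarrow> v \<in> V \<and> degree V E v = 1"

definition major :: "'a set \<Rightarrow> 'a set set \<Rightarrow> 'a \<Rightarrow> bool" where
  "major V E v \<longleftrightarrow> v \<in> V \<and> degree V E v \<ge> 3"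

definition terminal_of :: "'a set \<Rightarrow> 'a set set \<Rightarrow> 'a \<Rightarrow> 'a \<Rightarrow> bool" where
  "terminal_of V E u v \<longleftrightarrow> leaf V E u \<and> major V E v \<and>
     (\<forall>w. major V E w \<and> w \<noteq> v \<longrightarrow> tdist V E u v < tdist V E u w)"

definition ter :: "'a set \<Rightarrow> 'a set set \<Rightarrow> 'a \<Rightarrow> nat" where
  "ter V E v = card {u \<in> V. terminal_of V E u v}"

definition exterior_major :: "'a set \<Rightarrow> 'a set set \<Rightarrow> 'a \<Rightarrow> bool" where
  "exterior_major V E v \<longleftrightarrow> major V E v \<and> ter V E v > 0"

definition leg :: "'a set \<Rightarrow> 'a set set \<Rightarrow> 'a \<Rightarrow> 'a \<Rightarrow> 'a set" where
  "leg V E t u = set (tpath V E t u) - {t}"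

definition special :: "'a set \<Rightarrow> 'a set set \<Rightarrow> ('a set \<Rightarrow> int) \<Rightarrow> 'a \<Rightarrow> bool" where
  "special V E \<sigma> t \<longleftrightarrow> exterior_major V E t \<and>
     (\<exists>n m. n \<noteq> m \<and> terminal_of V E n t \<and> terminal_of V E m t \<and>
        (\<forall>i x y. x \<in> leg V E t n \<and> y \<in> leg V E t m \<and>
            tdist V E t x = i \<and> tdist V E t y = i \<longrightarrow> sdist V E \<sigma> t x \<noteq> sdist V E \<sigma> t y))"

definition eta :: "'a set \<Rightarrow> 'a set set \<Rightarrow> ('a set \<Rightarrow> int) \<Rightarrow> 'a set" where
  "eta V E \<sigma> = {t \<in> V. special V E \<sigma> t}"

end

theory Submission imports Defs begin

(*
  Write L for the set of terminal vertices and Ext for the set of exterior major vertices. For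
  every signature satisfying the hypotheses we show dim(T^sigma) = |L| - |Ext| - |eta(T^sigma)|.
  For the all-positive signature the signed distance is the ordinary one and no vertex is
  special, so this contains the classical formula dim(T) = |L| - |Ext|, and the theorem follows
  by subtraction.

  Lower bound: call the leg of a terminal vertex free if it contains no vertex of the resolving
  set W. Every vertex off a leg of t sees the vertices of that leg through t, so two vertices at
  the same distance from t on two free legs are resolved only if their signed distances from t
  differ: two free legs at t make t special, and three are impossible even then, since the first
  vertices of the legs have signed distance +1 or -1 from t. The other legs are disjoint and each
  contains a vertex of W.

  Upper bound: at every exterior major vertex omit one terminal vertex, and a special pair of
  them at special vertices; the remaining terminal vertices form W. Two vertices x, y unresolved
  by W are unresolved by unsigned distances as well, so the middle vertex c of the path between
  them has two branches, containing x and y, that avoid W. A major vertex in these branches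
  yields, at the farthest one, a terminal vertex of W inside them. Otherwise c is major (T is not
  a path), x and y lie on the omitted special pair of legs of c, and a terminal vertex of c kept
  in W, which exists because ter(c) is not 2, sees x and y through c and separates them.
*)

section \<open>Paths and path signs\<close>

lemma is_gpath_iff_successively:
  "is_gpath V E xs u v \<longleftrightarrow> xs \<noteq> [] \<and> hd xs = u \<and> last xs = v \<and> distinct xs \<and>
     set xs \<subseteq> V \<and> successively (\<lambda>a b. {a,b} \<in> E) xs"
  by (simp add: is_gpath_def successively_conv_nth)

definition is_walk :: "'a set \<Rightarrow> 'a set set \<Rightarrow> 'a list \<Rightarrow> bool" where
  "is_walk V E xs \<longleftrightarrow> xs \<noteq> [] \<and> set xs \<subseteq> V \<and> successively (\<lambda>a b. {a,b} \<in> E) xs"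

lemma walk_shortens_to_gpath:
  assumes "is_walk V E xs"
  shows "\<exists>ys. is_gpath V E ys (hd xs) (last xs) \<and> length ys \<le> length xs"
  using assms
proof (induction "length xs" arbitrary: xs rule: less_induct)
  case less
  show ?case
  proof (cases "distinct xs")
    case True
    then show ?thesis using less.prems by (auto simp: is_walk_def is_gpath_iff_successively)
  next
    case False
    then obtain as a bs cs where xs: "xs = as @ [a] @ bs @ [a] @ cs"
      using not_distinct_decomp by blast
    let ?ys = "as @ [a] @ cs"
    have "is_walk V E ?ys" using less.prems unfolding xs is_walk_def
      by (auto simp: successively_append_iff successively_Cons)
    moreover have shorter: "length ?ys < length xs" using xs by simp
    ultimately obtain zs where zs: "is_gpath V E zs (hd ?ys) (last ?ys)" "length zs \<le> length ?ys"
      using less.hyps by blast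
    have "hd ?ys = hd xs" "last ?ys = last xs" by (simp_all add: xs hd_append last_append)
    moreover have "length zs \<le> length xs" using zs(2) shorter by simp
    ultimately show ?thesis using zs(1) by metis
  qed
qed

lemma finite_ex_greatest:
  assumes "finite A" "x \<in> A"
  shows "\<exists>z\<in>A. \<forall>y\<in>A. (f y :: nat) \<le> f z"
proof -
  have "Max (f ` A) \<in> f ` A" using assms by (intro Max_in) auto
  then obtain z where "z \<in> A" "f z = Max (f ` A)" by auto
  then show ?thesis using assms(1) by (metis Max_ge finite_imageI image_eqI)
qed

lemma finite_ex_least:
  assumes "finite A" "x \<in> A"
  shows "\<exists>z\<in>A. \<forall>y\<in>A. (f z :: nat) \<le> f y"
proof -
  have "Min (f ` A) \<in> f ` A" using assms by (intro Min_in) auto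
  then obtain z where "z \<in> A" "f z = Min (f ` A)" by auto
  then show ?thesis using assms(1) by (metis Min_le finite_imageI image_eqI)
qed

lemma path_sign_singleton [simp]: "path_sign \<sigma> [a] = 1"
  by (simp add: path_sign_def)

lemma path_sign_Cons_Cons: "path_sign \<sigma> (a # b # xs) = \<sigma> {a,b} * path_sign \<sigma> (b # xs)"
proof -
  have "[0..<length (a # b # xs) - 1] = 0 # map Suc [0..<length xs]"
    by (simp add: upt_conv_Cons map_Suc_upt del: upt_Suc)
  then show ?thesis unfolding path_sign_def by (simp add: comp_def)
qed

lemma path_sign_append:
  "xs \<noteq> [] \<Longrightarrow> ys \<noteq> [] \<Longrightarrow>
   path_sign \<sigma> (xs @ ys) = path_sign \<sigma> xs * \<sigma> {last xs, hd ys} * path_sign \<sigma> ys"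
proof (induction xs rule: induct_list012)
  case (2 a) then show ?case by (cases ys) (auto simp: path_sign_Cons_Cons)
qed (simp_all add: path_sign_Cons_Cons)

lemma path_sign_rev: "path_sign \<sigma> (rev xs) = path_sign \<sigma> xs"
proof (induction xs)
  case (Cons a xs)
  show ?case
  proof (cases xs)
    case (Cons b ys)
    have "path_sign \<sigma> (rev (a # xs)) = path_sign \<sigma> (rev xs) * \<sigma> {b, a}"
      using path_sign_append[of "rev xs" "[a]" \<sigma>] Cons by (simp add: last_rev)
    then show ?thesis using Cons.IH Cons by (simp add: path_sign_Cons_Cons insert_commute)
  qed simp
qed simp

lemma path_sign_concat:
  assumes "xs \<noteq> []" "ys \<noteq> []" "last xs = hd ys"
  shows "path_sign \<sigma> (xs @ tl ys) = path_sign \<sigma> xs * path_sign \<sigma> ys"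
proof (cases "tl ys")
  case Nil
  then have "ys = [hd ys]" using assms(2) by (metis list.collapse)
  then show ?thesis using Nil by (metis append_Nil2 mult.right_neutral path_sign_singleton)
next
  case (Cons c t)
  have ys: "ys = hd ys # c # t" using assms(2) Cons by (metis list.collapse)
  have "path_sign \<sigma> (xs @ tl ys) = path_sign \<sigma> xs * \<sigma> {last xs, c} * path_sign \<sigma> (c # t)"
    using path_sign_append[OF assms(1), of "c # t"] Cons by simp
  also have "\<dots> = path_sign \<sigma> xs * path_sign \<sigma> ys" using assms(3) ys
    by (metis mult.assoc path_sign_Cons_Cons)
  finally show ?thesis .
qed

lemma path_sign_unit:
  assumes "signature E \<sigma>" "successively (\<lambda>a b. {a,b} \<in> E) xs"
  shows "path_sign \<sigma> xs = 1 \<or> path_sign \<sigma> xs = -1"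
  using assms(2)
proof (induction xs rule: induct_list012)
  case (3 a b xs)
  have "\<sigma> {a,b} = 1 \<or> \<sigma> {a,b} = -1" using "3.prems" assms(1) by (simp add: signature_def)
  then show ?case using 3 by (auto simp: path_sign_Cons_Cons)
qed (simp_all add: path_sign_def)

lemma path_sign_const_1: "path_sign (\<lambda>_. 1) xs = 1"
  by (simp add: path_sign_def map_replicate_const)

section \<open>Paths in a tree\<close>

locale tree_graph =
  fixes V :: "'a set" and E :: "'a set set"
  assumes tree_VE: "tree V E"
begin

abbreviation "P u v \<equiv> tpath V E u v"
abbreviation "d u v \<equiv> tdist V E u v"
abbreviation "adj u v \<equiv> {u,v} \<in> E"

lemma finite_V: "finite V" using tree_VE by (simp add: tree_def simple_graph_def)

lemma edge_in_V: "{a,b} \<in> E \<Longrightarrow> a \<in> V \<and> b \<in> V \<and> a \<noteq> b"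
proof -
  assume "{a,b} \<in> E"
  then obtain u v where "{a,b} = {u,v}" "u \<noteq> v" "u \<in> V" "v \<in> V"
    using tree_VE unfolding tree_def simple_graph_def by blast
  then show ?thesis by (metis doubleton_eq_iff)
qed

lemma tpath_is_gpath: "u \<in> V \<Longrightarrow> v \<in> V \<Longrightarrow> is_gpath V E (P u v) u v"
proof -
  assume "u \<in> V" "v \<in> V"
  then have "\<exists>!xs. is_gpath V E xs u v" using tree_VE unfolding tree_def by blast
  then show ?thesis unfolding tpath_def by (rule theI')
qed

lemma tpath_eqI: "is_gpath V E xs u v \<Longrightarrow> P u v = xs"
proof -
  assume g: "is_gpath V E xs u v"
  then have "u \<in> V" "v \<in> V" unfolding is_gpath_def by (metis hd_in_set last_in_set subsetD)+
  then have "\<exists>!xs. is_gpath V E xs u v" using tree_VE unfolding tree_def by blast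
  then show ?thesis unfolding tpath_def using g by (rule the1_equality)
qed

lemma tpath_props:
  assumes "u \<in> V" "v \<in> V"
  shows "P u v \<noteq> []" "hd (P u v) = u" "last (P u v) = v" "distinct (P u v)"
        "set (P u v) \<subseteq> V" "successively adj (P u v)" "u \<in> set (P u v)" "v \<in> set (P u v)"
  using tpath_is_gpath[OF assms] hd_in_set[of "P u v"] last_in_set[of "P u v"]
  unfolding is_gpath_iff_successively by auto

lemma tpath_rev: assumes "u \<in> V" "v \<in> V" shows "P v u = rev (P u v)"
proof -
  have "is_gpath V E (rev (P u v)) v u"
    using tpath_props[OF assms] unfolding is_gpath_iff_successively
    by (auto simp: hd_rev last_rev insert_commute)
  then show ?thesis by (rule tpath_eqI)
qed

lemma tpath_refl: "u \<in> V \<Longrightarrow> P u u = [u]"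
  by (rule tpath_eqI) (simp add: is_gpath_iff_successively)

lemma tpath_adj: "adj u v \<Longrightarrow> P u v = [u,v]"
  using edge_in_V[of u v] by (intro tpath_eqI) (auto simp: is_gpath_iff_successively)

lemma tdist_eq: "d u v = length (P u v) - 1" by (simp add: tdist_def)

lemma length_tpath:
  assumes "u \<in> V" "v \<in> V"
  shows "length (P u v) = Suc (d u v)"
proof -
  have "length (P u v) \<noteq> 0" using tpath_props(1)[OF assms] by simp
  then show ?thesis by (simp add: tdist_eq)
qed

lemma tdist_refl: "u \<in> V \<Longrightarrow> d u u = 0" by (simp add: tdist_eq tpath_refl)

lemma tdist_commute: "u \<in> V \<Longrightarrow> v \<in> V \<Longrightarrow> d v u = d u v"
  by (simp only: tdist_eq tpath_rev[of u v] length_rev)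

lemma tdist_eq_0D: assumes "u \<in> V" "v \<in> V" "d u v = 0" shows "u = v"
proof -
  have "length (P u v) \<noteq> 0" using tpath_props(1)[OF assms(1,2)] by simp
  then have "length (P u v) = 1" using assms(3) unfolding tdist_eq by arith
  then obtain a where "P u v = [a]" by (metis One_nat_def length_0_conv length_Suc_conv)
  then show ?thesis using tpath_props(2,3)[OF assms(1,2)] by simp
qed

lemma tdist_adj: "adj u v \<Longrightarrow> d u v = 1" by (simp add: tdist_eq tpath_adj)

lemma tpath_to_nth:
  assumes "u \<in> V" "v \<in> V" "i < length (P u v)"
  shows "P u (P u v ! i) = take (Suc i) (P u v)"
proof (rule tpath_eqI)
  have sa: "successively adj (take (Suc i) (P u v))"
    using tpath_props(6)[OF assms(1,2)]
    by (metis append_take_drop_id successively_append_iff)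
  show "is_gpath V E (take (Suc i) (P u v)) u (P u v ! i)"
  proof -
    have "last (take (Suc i) (P u v)) = P u v ! i" using assms(3) by (simp add: take_Suc_conv_app_nth)
    moreover have "take (Suc i) (P u v) \<noteq> []" using assms(3) by (cases "P u v") auto
    ultimately show ?thesis using tpath_props[OF assms(1,2)] set_take_subset[of "Suc i" "P u v"] sa
      unfolding is_gpath_iff_successively by auto
  qed
qed

lemma tpath_from_nth:
  assumes "u \<in> V" "v \<in> V" "i < length (P u v)"
  shows "P (P u v ! i) v = drop i (P u v)"
proof (rule tpath_eqI)
  have sa: "successively adj (drop i (P u v))"
    using tpath_props(6)[OF assms(1,2)]
    by (metis append_take_drop_id successively_append_iff)
  show "is_gpath V E (drop i (P u v)) (P u v ! i) v"
  proof -
    have "drop i (P u v) \<noteq> []" using assms(3) by simp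
    then show ?thesis using tpath_props[OF assms(1,2)] set_drop_subset[of i "P u v"] sa assms(3)
      unfolding is_gpath_iff_successively by (auto simp: hd_drop_conv_nth)
  qed
qed

lemma tpath_split:
  assumes "u \<in> V" "v \<in> V" "w \<in> set (P u v)"
  shows "P u v = P u w @ tl (P w v)" "d u v = d u w + d w v"
proof -
  obtain i where i: "i < length (P u v)" "P u v ! i = w" using assms(3) by (metis in_set_conv_nth)
  have t: "P u w = take (Suc i) (P u v)" using tpath_to_nth[OF assms(1,2) i(1)] i(2) by simp
  have dr: "P w v = drop i (P u v)" using tpath_from_nth[OF assms(1,2) i(1)] i(2) by simp
  have "tl (drop i (P u v)) = drop (Suc i) (P u v)" by (simp add: drop_Suc tl_drop)
  then show "P u v = P u w @ tl (P w v)" using t dr by simp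
  show "d u v = d u w + d w v" using t dr i(1) by (simp add: tdist_eq)
qed


lemma tpath_concat_walk:
  assumes "u \<in> V" "v \<in> V" "w \<in> V"
  shows "is_walk V E (P u v @ tl (P v w)) \<and> hd (P u v @ tl (P v w)) = u \<and> last (P u v @ tl (P v w)) = w"
proof -
  note p1 = tpath_props[OF assms(1,2)] and p2 = tpath_props[OF assms(2,3)]
  obtain r where r: "P v w = v # r" using p2(1,2) by (metis list.collapse)
  have "successively adj (v # r)" using p2(6) r by simp
  then have "successively adj (P u v @ r)" using p1(1,3,6)
    by (auto simp: successively_append_iff successively_Cons)
  moreover have "set (P u v @ r) \<subseteq> V" using p1(5) p2(5) r by auto
  moreover have "last (P u v @ r) = w" using p1(3) p2(3) r by (cases r) auto
  ultimately show ?thesis using p1(1,2) r by (simp add: is_walk_def)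
qed

lemma tdist_triangle:
  assumes "u \<in> V" "v \<in> V" "w \<in> V"
  shows "d u w \<le> d u v + d v w"
proof -
  let ?xs = "P u v @ tl (P v w)"
  have walk: "is_walk V E ?xs" "hd ?xs = u" "last ?xs = w" using tpath_concat_walk[OF assms] by auto
  obtain ys where ys: "is_gpath V E ys u w" "length ys \<le> length ?xs"
    using walk_shortens_to_gpath[OF walk(1)] walk(2,3) by auto
  then have "length (P u w) \<le> length ?xs" using tpath_eqI[OF ys(1)] by simp
  then show ?thesis
    using length_tpath[OF assms(1,2)] length_tpath[OF assms(2,3)] length_tpath[OF assms(1,3)] by simp
qed

lemma adj_in_V: "adj p q \<Longrightarrow> p \<in> V" "adj p q \<Longrightarrow> q \<in> V" "adj p q \<Longrightarrow> p \<noteq> q"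
  using edge_in_V by auto

lemma adj_sym: "adj p q \<Longrightarrow> adj q p" by (simp add: insert_commute)

lemma tpath_Cons_tl: "u \<in> V \<Longrightarrow> v \<in> V \<Longrightarrow> P u v = u # tl (P u v)"
  using tpath_props(1,2) by (metis list.collapse)

lemma tpath_Cons_adj:
  assumes "adj p q" "z \<in> V" "q \<in> set (P p z)"
  shows "P p z = p # P q z"
proof -
  have pq: "p \<in> V" "q \<in> V" using adj_in_V assms(1) by auto
  have "P p z = P p q @ tl (P q z)" using tpath_split(1)[OF pq(1) assms(2,3)] .
  also have "P p q = [p,q]" using tpath_adj[OF assms(1)] .
  finally show ?thesis using tpath_Cons_tl[OF pq(2) assms(2)] by (metis append_Cons append_Nil)
qed

lemma adj_on_tpath_cases:
  assumes "adj p q" "z \<in> V"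
  shows "q \<in> set (P p z) \<or> p \<in> set (P q z)"
proof (cases "q \<in> set (P p z)")
  case True then show ?thesis by simp
next
  case False
  then have nq: "q \<notin> set (P p z)" .
  have pq: "p \<in> V" "q \<in> V" using adj_in_V assms(1) by auto
  have "is_gpath V E (q # P p z) q z"
    unfolding is_gpath_iff_successively using tpath_props[OF pq(1) assms(2)] nq pq adj_sym[OF assms(1)]
    by (auto simp: successively_Cons)
  then have "P q z = q # P p z" by (rule tpath_eqI)
  then show ?thesis using tpath_props(7)[OF pq(1) assms(2)] by simp
qed

lemma adj_on_tpath_excl:
  assumes "adj p q" "z \<in> V" "q \<in> set (P p z)" "p \<in> set (P q z)"
  shows False
proof -
  have "P p z = p # P q z" using tpath_Cons_adj assms by blast
  moreover have "P q z = q # P p z" using tpath_Cons_adj[OF adj_sym[OF assms(1)] assms(2,4)] .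
  ultimately have "length (P p z) = Suc (length (P q z))" "length (P q z) = Suc (length (P p z))"
    by (metis length_Cons)+
  then show False by simp
qed

lemma tpath_beyond_adj:
  assumes "adj p q" "s \<in> V" "z \<in> V" "P p z = p # P q z" "s \<in> set (P q z)"
  shows "q \<in> set (P p s)"
proof -
  have pq: "p \<in> V" "q \<in> V" using adj_in_V assms(1) by auto
  have sz: "s \<in> set (P p z)" using assms(4,5) by simp
  have spl: "P p z = P p s @ tl (P s z)" using tpath_split(1)[OF pq(1) assms(3) sz] .
  have "distinct (P p z)" using tpath_props(4)[OF pq(1) assms(3)] .
  then have "p \<notin> set (P q z)" using assms(4) by (metis distinct.simps(2))
  then have sp: "s \<noteq> p" using assms(5) by blast
  obtain r where r: "P p s = p # r" using tpath_Cons_tl[OF pq(1) assms(2)] by blast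
  have "r \<noteq> []" using r tpath_props(3)[OF pq(1) assms(2)] sp by auto
  then have "hd (P q z) = hd r" using spl r assms(4) by simp
  then have "q = hd r" using tpath_props(2)[OF pq(2) assms(3)] by simp
  then show ?thesis using r \<open>r \<noteq> []\<close> by simp
qed

lemma tpath_across_edge:
  assumes "adj p q" "z \<in> V" "u \<in> V" "q \<in> set (P p z)" "p \<in> set (P q u)"
  shows "P z u = rev (P q z) @ P p u"
proof (rule tpath_eqI)
  have pq: "p \<in> V" "q \<in> V" using adj_in_V assms(1) by auto
  have c1: "P p z = p # P q z" using tpath_Cons_adj assms(1,2,4) by blast
  have c2: "P q u = q # P p u" using tpath_Cons_adj[OF adj_sym[OF assms(1)] assms(3,5)] .
  have disj: "set (P q z) \<inter> set (P p u) = {}"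
  proof (rule ccontr)
    assume "set (P q z) \<inter> set (P p u) \<noteq> {}"
    then obtain s where s: "s \<in> set (P q z)" "s \<in> set (P p u)" by blast
    have sV: "s \<in> V" using s(1) tpath_props(5)[OF pq(2) assms(2)] by blast
    have "q \<in> set (P p s)" using tpath_beyond_adj[OF assms(1) sV assms(2) c1 s(1)] .
    moreover have "p \<in> set (P q s)" using tpath_beyond_adj[OF adj_sym[OF assms(1)] sV assms(3) c2 s(2)] .
    ultimately show False using adj_on_tpath_excl[OF assms(1) sV] by blast
  qed
  have lq: "last (rev (P q z)) = q" using tpath_props(1,2)[OF pq(2) assms(2)] by (simp add: last_rev)
  have hp: "hd (P p u) = p" using tpath_props(2)[OF pq(1) assms(3)] .
  show "is_gpath V E (rev (P q z) @ P p u) z u"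
    unfolding is_gpath_iff_successively
    using tpath_props[OF pq(2) assms(2)] tpath_props[OF pq(1) assms(3)] disj lq hp adj_sym[OF assms(1)]
    by (auto simp: successively_append_iff hd_append hd_rev insert_commute)
qed

lemma tdist_across_edge:
  assumes "adj p q" "z \<in> V" "u \<in> V" "q \<in> set (P p z)" "p \<in> set (P q u)"
  shows "d z u = d z q + 1 + d p u" "p \<in> set (P z u)" "q \<in> set (P z u)"
proof -
  have pq: "p \<in> V" "q \<in> V" using adj_in_V assms(1) by auto
  have e: "P z u = rev (P q z) @ P p u" using tpath_across_edge[OF assms] .
  have "d z q = d q z" using tdist_commute[OF pq(2) assms(2)] .
  moreover obtain n m where "length (P q z) = Suc n" "length (P p u) = Suc m"
    using tpath_props(1)[OF pq(2) assms(2)] tpath_props(1)[OF pq(1) assms(3)]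
    by (metis length_Suc_conv list.exhaust)
  ultimately show "d z u = d z q + 1 + d p u" using e by (simp add: tdist_eq)
  show "p \<in> set (P z u)" using e tpath_props(7)[OF pq(1) assms(3)] by simp
  show "q \<in> set (P z u)" using e tpath_props(7)[OF pq(2) assms(2)] by simp
qed

text \<open>For an edge pq, \<open>branch p q\<close> is the vertex set of the component of \<open>T - p\<close> containing q.\<close>

abbreviation "branch p q \<equiv> {z \<in> V. q \<in> set (P p z)}"
abbreviation "nbrs v \<equiv> {u \<in> V. adj u v}"

lemma finite_nbrs: "finite (nbrs v)" using finite_V by simp

lemma degree_eq_card_nbrs: "degree V E v = card (nbrs v)" by (simp add: degree_def)

lemma tpath_second:
  assumes "v \<in> V" "w \<in> V" "v \<noteq> w"
  shows "Suc (Suc 0) \<le> length (P v w)" "adj v (P v w ! 1)" "P v w ! 1 \<in> set (P v w)"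
        "P v w ! 1 \<in> V" "w \<in> branch v (P v w ! 1)"
proof -
  have "length (P v w) \<noteq> 1"
  proof
    assume "length (P v w) = 1"
    then obtain a where "P v w = [a]" by (metis One_nat_def length_0_conv length_Suc_conv)
    then show False using tpath_props(2,3)[OF assms(1,2)] assms(3) by simp
  qed
  moreover have "length (P v w) \<noteq> 0" using tpath_props(1)[OF assms(1,2)] by simp
  ultimately show l: "Suc (Suc 0) \<le> length (P v w)" by arith
  have "adj (P v w ! 0) (P v w ! Suc 0)"
    using successively_nth[OF tpath_props(6)[OF assms(1,2)]] l by simp
  moreover have "P v w ! 0 = v" using tpath_props(1,2)[OF assms(1,2)] by (simp add: hd_conv_nth)
  ultimately show a: "adj v (P v w ! 1)" by simp
  show s: "P v w ! 1 \<in> set (P v w)" using l by simp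
  show "P v w ! 1 \<in> V" using adj_in_V(2)[OF a] .
  show "w \<in> branch v (P v w ! 1)" using assms(2) s by simp
qed

lemma tpath_into_branch: "adj p q \<Longrightarrow> z \<in> branch p q \<Longrightarrow> P p z = p # P q z"
  using tpath_Cons_adj by blast

lemma branch_unique:
  assumes "adj v p" "adj v p'" "z \<in> branch v p" "z \<in> branch v p'"
  shows "p = p'"
proof -
  have "P v z = v # P p z" "P v z = v # P p' z" using tpath_into_branch assms by blast+
  then have "hd (P p z) = hd (P p' z)" by simp
  then show ?thesis using tpath_props(2) adj_in_V assms by (metis (no_types, lifting) mem_Collect_eq)
qed

lemma notin_branch: "adj p q \<Longrightarrow> z \<in> V \<Longrightarrow> z \<notin> branch p q \<Longrightarrow> p \<in> set (P q z)"
  using adj_on_tpath_cases by blast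

lemma root_notin_branch: "adj p q \<Longrightarrow> p \<notin> branch p q"
  using tpath_refl adj_in_V by fastforce

lemma tpath_through_root:
  assumes ca: "adj c a" and x: "x \<in> branch c a" and wV: "w \<in> V" and w: "w \<notin> branch c a"
  shows "c \<in> set (P x w)"
  using tdist_across_edge(2)[OF ca _ wV _ notin_branch[OF ca wV w]] x by simp

lemma leaf_if_nbrs_toward:
  assumes cV: "c \<in> V" and zV: "z \<in> V" and zc: "z \<noteq> c"
    and toward: "\<And>y. adj z y \<Longrightarrow> y \<in> set (P z c)"
  shows "leaf V E z"
proof -
  let ?nb = "P z c ! 1"
  have nb: "adj z ?nb" "?nb \<in> V" using tpath_second[OF zV cV zc] by auto
  have "nbrs z = {?nb}"
  proof
    show "{?nb} \<subseteq> nbrs z" using nb adj_sym by auto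
    show "nbrs z \<subseteq> {?nb}"
    proof
      fix y assume "y \<in> nbrs z"
      then have zy: "adj z y" and yV: "y \<in> V" using adj_sym by auto
      then have "P z c = z # P y c" using tpath_Cons_adj[OF zy cV] toward by blast
      then have "?nb = hd (P y c)" using tpath_props(1)[OF yV cV] by (simp add: hd_conv_nth)
      then show "y \<in> {?nb}" using tpath_props(2)[OF yV cV] by simp
    qed
  qed
  then show ?thesis using zV by (simp add: leaf_def degree_eq_card_nbrs)
qed

text \<open>A vertex farthest from c among those whose path from c passes through x is a leaf.\<close>

lemma leaf_beyond:
  assumes cV: "c \<in> V" and xV: "x \<in> V" and cx: "c \<noteq> x"
  shows "\<exists>l. leaf V E l \<and> x \<in> set (P c l)"
proof -
  let ?A = "{z \<in> V. x \<in> set (P c z)}"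
  have xA: "x \<in> ?A" using xV tpath_props(8)[OF cV xV] by simp
  have "finite ?A" using finite_V by simp
  then obtain z where zA: "z \<in> ?A" and far: "\<forall>y\<in>?A. d c y \<le> d c z"
    using finite_ex_greatest[OF _ xA, of "d c"] by blast
  have zV: "z \<in> V" and xz: "x \<in> set (P c z)" using zA by auto
  have zc: "z \<noteq> c" using xz cV cx tpath_refl by fastforce
  have "y \<in> set (P z c)" if zy: "adj z y" for y
  proof (rule ccontr)
    assume "y \<notin> set (P z c)"
    then have "z \<in> set (P y c)" using adj_on_tpath_cases[OF zy cV] by blast
    then have "P y c = y # P z c" using tpath_Cons_adj[OF adj_sym[OF zy] cV] by blast
    moreover have yV: "y \<in> V" using adj_in_V(2)[OF zy] .
    ultimately have "P c y = P c z @ [y]" using tpath_rev[OF yV cV] tpath_rev[OF zV cV] by simp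
    then have "x \<in> set (P c y)" "d c y = Suc (d c z)" using xz tpath_props(1)[OF cV zV]
      by (auto simp: tdist_eq)
    then show False using far yV by force
  qed
  then show ?thesis using leaf_if_nbrs_toward[OF cV zV zc] xz by blast
qed

lemma exists_edge_leaving:
  assumes "set xs \<subseteq> V" "xs \<noteq> []" "v \<in> V" "v \<notin> set xs"
  shows "\<exists>s z'. s \<in> set xs \<and> adj s z' \<and> z' \<notin> set xs \<and> v \<in> branch s z'"
proof -
  obtain s where s: "s \<in> set xs" and smin: "\<forall>y\<in>set xs. d v s \<le> d v y"
    using finite_ex_least[of "set xs" "hd xs" "d v"] assms(2) by auto
  have sV: "s \<in> V" using s assms(1) by auto
  have sv: "s \<noteq> v" using s assms(4) by auto
  let ?z = "P s v ! 1"
  have z: "adj s ?z" "v \<in> branch s ?z" "?z \<in> V" using tpath_second[OF sV assms(3) sv] by auto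
  have "P s v = s # P ?z v" using tpath_into_branch[OF z(1,2)] .
  then have "length (P s v) = Suc (length (P ?z v))" by (metis length_Cons)
  then have "d s v = Suc (d ?z v)" using tpath_props(1)[OF z(3) assms(3)] unfolding tdist_eq by simp
  then have "d v ?z < d v s" using tdist_commute[OF sV assms(3)] tdist_commute[OF z(3) assms(3)] by simp
  then have "?z \<notin> set xs" using smin by force
  then show ?thesis using s z by blast
qed

lemma major_if_three_nbrs:
  assumes "v \<in> V" "adj v a" "adj v b" "adj v c" "a \<noteq> b" "a \<noteq> c" "b \<noteq> c"
  shows "major V E v"
proof -
  have "{a,b,c} \<subseteq> nbrs v" using assms adj_in_V adj_sym by auto
  then have "card {a,b,c} \<le> card (nbrs v)" using finite_nbrs by (rule card_mono[rotated])
  then have "3 \<le> degree V E v" using assms(5-7) by (simp add: degree_eq_card_nbrs)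
  then show ?thesis using assms(1) by (simp add: major_def)
qed

lemma degree_ge_2_if_two_nbrs:
  assumes "v \<in> V" "adj v a" "adj v b" "a \<noteq> b"
  shows "2 \<le> degree V E v"
proof -
  have "{a,b} \<subseteq> nbrs v" using assms adj_in_V adj_sym by auto
  then have "card {a,b} \<le> card (nbrs v)" using finite_nbrs by (rule card_mono[rotated])
  then show ?thesis using assms(4) by (simp add: degree_eq_card_nbrs)
qed

lemma tpath_interior_nbrs:
  assumes "a \<in> V" "b \<in> V" "0 < j" "Suc j < length (P a b)"
  shows "adj (P a b ! j) (P a b ! (j - 1))" "adj (P a b ! j) (P a b ! Suc j)"
        "P a b ! (j - 1) \<noteq> P a b ! Suc j"
proof -
  note pp = tpath_props[OF assms(1,2)]
  show "adj (P a b ! j) (P a b ! (j - 1))" using successively_nth[OF pp(6), of "j - 1"] assms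
    by (simp add: insert_commute)
  show "adj (P a b ! j) (P a b ! Suc j)" using successively_nth[OF pp(6), of j] assms by simp
  show "P a b ! (j - 1) \<noteq> P a b ! Suc j" using pp(4) assms by (simp add: nth_eq_iff_index_eq)
qed

lemma longest_tpath_covers_V:
  assumes no_major: "\<forall>v\<in>V. \<not> major V E v" and xV: "x \<in> V" and yV: "y \<in> V"
    and longest: "\<And>a b. a \<in> V \<Longrightarrow> b \<in> V \<Longrightarrow> d a b \<le> d x y"
  shows "set (P x y) = V"
proof
  let ?xs = "P x y"
  note pp = tpath_props[OF xV yV]
  show "set ?xs \<subseteq> V" using pp by simp
  show "V \<subseteq> set ?xs"
  proof
    fix v assume vV: "v \<in> V"
    show "v \<in> set ?xs"
    proof (rule ccontr)
      assume "v \<notin> set ?xs"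
      then obtain s z where sz: "s \<in> set ?xs" "adj s z" "z \<notin> set ?xs"
        using exists_edge_leaving[OF pp(5) pp(1) vV] by blast
      obtain j where j: "j < length ?xs" "?xs ! j = s" using sz(1) by (metis in_set_conv_nth)
      have zV: "z \<in> V" using adj_in_V sz(2) by auto
      consider "j = 0" | "j = length ?xs - 1" | "0 < j" "Suc j < length ?xs" using j(1) by linarith
      then show False
      proof cases
        case 1
        then have "s = x" using j pp by (simp add: hd_conv_nth)
        then have "is_gpath V E (z # ?xs) z y"
          unfolding is_gpath_iff_successively using pp sz zV adj_sym by (auto simp: successively_Cons)
        then have "d z y = Suc (d x y)" using pp by (simp add: tpath_eqI tdist_eq)
        then show False using longest[OF zV yV] by simp
      next
        case 2
        then have "s = y" using j pp by (simp add: last_conv_nth)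
        then have "is_gpath V E (?xs @ [z]) x z"
          unfolding is_gpath_iff_successively using pp sz zV by (auto simp: successively_append_iff)
        then have "d x z = Suc (d x y)" using pp by (simp add: tpath_eqI tdist_eq)
        then show False using longest[OF xV zV] by simp
      next
        case 3
        note nb = tpath_interior_nbrs[OF xV yV 3]
        have "z \<noteq> ?xs ! (j - 1)" "z \<noteq> ?xs ! Suc j" using sz(3) 3 by auto
        then have "major V E s" using major_if_three_nbrs nb sz(1,2) j(2) pp(5) by blast
        then show False using no_major sz(1) pp(5) by blast
      qed
    qed
  qed
qed

lemma tpath_chordless:
  assumes xV: "x \<in> V" and yV: "y \<in> V" and ij: "i < j" "j < length (P x y)"
    and "adj (P x y ! i) (P x y ! j)"
  shows "j = Suc i"
proof -
  let ?xs = "P x y"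
  have iV: "?xs ! i \<in> V" using ij tpath_props(5)[OF xV yV] by auto
  have dr: "P (?xs ! i) y = drop i ?xs" using tpath_from_nth[OF xV yV] ij by simp
  have jl: "j - i < length (P (?xs ! i) y)" using dr ij by simp
  have "P (?xs ! i) (P (?xs ! i) y ! (j - i)) = take (Suc (j - i)) (P (?xs ! i) y)"
    using tpath_to_nth[OF iV yV jl] .
  then have "length (P (?xs ! i) (?xs ! j)) = Suc (j - i)" using dr ij by simp
  moreover have "length (P (?xs ! i) (?xs ! j)) = 2" using tpath_adj[OF assms(5)] by simp
  ultimately show ?thesis using ij by simp
qed

lemma path_graph_if_tpath_covers_V:
  assumes xV: "x \<in> V" and yV: "y \<in> V" and covers: "set (P x y) = V"
  shows "is_path_graph V E"
proof -
  let ?xs = "P x y"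
  note pp = tpath_props[OF xV yV]
  have "E = {{?xs ! i, ?xs ! Suc i} | i. Suc i < length ?xs}"
  proof
    show "{{?xs ! i, ?xs ! Suc i} | i. Suc i < length ?xs} \<subseteq> E"
      using successively_nth[OF pp(6)] by blast
    show "E \<subseteq> {{?xs ! i, ?xs ! Suc i} | i. Suc i < length ?xs}"
    proof
      fix e assume eE: "e \<in> E"
      then obtain a b where ab: "e = {a,b}" "a \<in> V" "b \<in> V"
        using tree_VE unfolding tree_def simple_graph_def by blast
      obtain i where i: "i < length ?xs" "?xs ! i = a" using ab covers by (metis in_set_conv_nth)
      obtain j where j: "j < length ?xs" "?xs ! j = b" using ab covers by (metis in_set_conv_nth)
      have "i \<noteq> j" using i j ab eE edge_in_V by auto
      then consider "i < j" | "j < i" by linarith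
      then show "e \<in> {{?xs ! i, ?xs ! Suc i} | i. Suc i < length ?xs}"
      proof cases
        case 1
        then have "j = Suc i" using tpath_chordless[OF xV yV 1 j(1)] eE ab i j by simp
        then show ?thesis using ab i j by blast
      next
        case 2
        then have "i = Suc j"
          using tpath_chordless[OF xV yV 2 i(1)] eE ab i j by (simp add: insert_commute)
        then show ?thesis using ab i j by (auto simp: insert_commute)
      qed
    qed
  qed
  then show ?thesis unfolding is_path_graph_def using pp(4) covers by blast
qed

lemma path_graph_if_no_major:
  assumes "\<forall>v\<in>V. \<not> major V E v"
  shows "is_path_graph V E"
proof -
  have "V \<times> V \<noteq> {}" using tree_VE by (simp add: tree_def)
  moreover have "finite (V \<times> V)" using finite_V by simp
  ultimately obtain xy where xy: "xy \<in> V \<times> V"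
    and xy_max: "\<forall>q\<in>V \<times> V. d (fst q) (snd q) \<le> d (fst xy) (snd xy)"
    using finite_ex_greatest[where f="\<lambda>q. d (fst q) (snd q)"] by blast
  obtain x y where xy_eq: "xy = (x, y)" by (cases xy)
  have xV: "x \<in> V" and yV: "y \<in> V" using xy xy_eq by auto
  have "\<And>a b. a \<in> V \<Longrightarrow> b \<in> V \<Longrightarrow> d a b \<le> d x y" using xy_max xy_eq by force
  then have "set (P x y) = V" by (rule longest_tpath_covers_V[OF assms xV yV])
  then show ?thesis by (rule path_graph_if_tpath_covers_V[OF xV yV])
qed

lemma leaf_on_tpath_end:
  assumes "leaf V E w" "a \<in> V" "b \<in> V" "w \<in> set (P a b)"
  shows "w = a \<or> w = b"
proof (rule ccontr)
  assume nw: "\<not> (w = a \<or> w = b)"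
  obtain j where j: "j < length (P a b)" "P a b ! j = w" using assms(4) by (metis in_set_conv_nth)
  note pp = tpath_props[OF assms(2,3)]
  have "j \<noteq> 0" using j nw pp by (metis hd_conv_nth)
  moreover have "j \<noteq> length (P a b) - 1" using j nw pp by (metis last_conv_nth)
  ultimately have "0 < j" "Suc j < length (P a b)" using j by arith+
  note nb = tpath_interior_nbrs[OF assms(2,3) this]
  have wV: "w \<in> V" using assms(1) by (simp add: leaf_def)
  have "2 \<le> degree V E w" using degree_ge_2_if_two_nbrs[OF wV] nb j(2) by metis
  then show False using assms(1) by (simp add: leaf_def)
qed

lemma terminal_ofD:
  assumes "terminal_of V E u t"
  shows "u \<in> V" "t \<in> V" "u \<noteq> t" "leaf V E u" "major V E t"
  using assms by (auto simp: terminal_of_def leaf_def major_def)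

lemma terminal_of_unique:
  assumes "terminal_of V E u t" "terminal_of V E u t'"
  shows "t = t'"
  using assms unfolding terminal_of_def by (metis less_asym)

lemma terminal_tpath_not_major:
  assumes "terminal_of V E u t" "z \<in> set (P t u)" "z \<noteq> t"
  shows "\<not> major V E z"
proof
  assume mz: "major V E z"
  note tb = terminal_ofD[OF assms(1)]
  have zV: "z \<in> V" using assms(2) tpath_props(5)[OF tb(2,1)] by auto
  have "d t u = d t z + d z u" using tpath_split(2)[OF tb(2,1) assms(2)] .
  moreover have "d t z > 0" using tdist_eq_0D[OF tb(2) zV] assms(3) by auto
  ultimately have "d u z < d u t" using tdist_commute[OF tb(2,1)] tdist_commute[OF zV tb(1)] by simp
  moreover have "d u t < d u z" using assms(1) mz assms(3) unfolding terminal_of_def by blast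
  ultimately show False by simp
qed

lemma leg_first:
  assumes "terminal_of V E u t"
  shows "adj t (P t u ! 1)" "P t u ! 1 \<in> leg V E t u" "d t (P t u ! 1) = 1" "P t u ! 1 \<in> V"
proof -
  note tb = terminal_ofD[OF assms(1)]
  note s = tpath_second[OF tb(2,1) tb(3)[symmetric]]
  show a: "adj t (P t u ! 1)" using s by simp
  show "P t u ! 1 \<in> leg V E t u" using s adj_in_V(3)[OF a] by (simp add: leg_def)
  show "d t (P t u ! 1) = 1" using tdist_adj[OF a] .
  show "P t u ! 1 \<in> V" using s by simp
qed

lemma terminal_tpath_nbr:
  assumes tu: "terminal_of V E u t" and s: "s \<in> set (P t u)" "s \<noteq> t" and sz: "adj s z"
  shows "z \<in> set (P t u)"
proof (rule ccontr)
  assume z: "z \<notin> set (P t u)"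
  note tb = terminal_ofD[OF tu]
  note pp = tpath_props[OF tb(2,1)]
  have sV: "s \<in> V" using s pp by auto
  obtain j where j: "j < length (P t u)" "P t u ! j = s" using s(1) by (metis in_set_conv_nth)
  have j0: "0 < j" using j s(2) pp by (metis hd_conv_nth gr0I)
  show False
  proof (cases "Suc j < length (P t u)")
    case True
    note nb = tpath_interior_nbrs[OF tb(2,1) j0 True]
    have "z \<noteq> P t u ! (j - 1)" "z \<noteq> P t u ! Suc j" using z j True by auto
    then have "major V E s" using major_if_three_nbrs[OF sV] nb j(2) sz by metis
    then show False using terminal_tpath_not_major[OF tu s] by simp
  next
    case False
    then have "s = u" using j pp by (metis Suc_lessI last_conv_nth diff_Suc_1 list.size(3) not_less0)
    have "adj s (P t u ! (j - 1))" using successively_nth[OF pp(6), of "j - 1"] j j0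
      by (simp add: insert_commute)
    moreover have "z \<noteq> P t u ! (j - 1)" using z j by auto
    ultimately have "2 \<le> degree V E s" using degree_ge_2_if_two_nbrs[OF sV] sz by metis
    then show False using tb(4) \<open>s = u\<close> by (simp add: leaf_def)
  qed
qed

lemma leg_eq_branch:
  assumes tu: "terminal_of V E u t"
  shows "leg V E t u = branch t (P t u ! 1)"
proof
  note tb = terminal_ofD[OF tu]
  note pp = tpath_props[OF tb(2,1)]
  let ?t1 = "P t u ! 1"
  have a: "adj t ?t1" and u: "u \<in> branch t ?t1"
    using tpath_second[OF tb(2,1) tb(3)[symmetric]] by auto
  have Ptu: "P t u = t # P ?t1 u" using tpath_into_branch[OF a u] .
  show "leg V E t u \<subseteq> branch t ?t1"
  proof
    fix z assume "z \<in> leg V E t u"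
    then have "z \<in> set (P t u)" "z \<noteq> t" by (auto simp: leg_def)
    then have z: "z \<in> set (P ?t1 u)" "z \<in> V" using Ptu pp(5) by (metis set_ConsD, blast)
    then show "z \<in> branch t ?t1" using tpath_beyond_adj[OF a z(2) tb(1) Ptu z(1)] by simp
  qed
  show "branch t ?t1 \<subseteq> leg V E t u"
  proof
    fix v assume v: "v \<in> branch t ?t1"
    have vt: "v \<noteq> t" using v root_notin_branch[OF a] by blast
    show "v \<in> leg V E t u"
    proof (rule ccontr)
      assume "v \<notin> leg V E t u"
      then have "v \<notin> set (P t u)" using vt by (simp add: leg_def)
      then obtain s z where sz: "s \<in> set (P t u)" "adj s z" "z \<notin> set (P t u)" "v \<in> branch s z"
        using exists_edge_leaving[OF pp(5) pp(1)] v by blast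
      then have st: "s = t" using terminal_tpath_nbr[OF tu] by blast
      then have "z = ?t1" using branch_unique[OF sz(2)[unfolded st] a] sz(4) v by blast
      then show False using sz(3) tpath_second(3)[OF tb(2,1) tb(3)[symmetric]] by simp
    qed
  qed
qed

lemma legs_disjoint:
  assumes "terminal_of V E u t" "terminal_of V E u' t'" "u \<noteq> u'"
  shows "leg V E t u \<inter> leg V E t' u' = {}"
proof (rule ccontr)
  assume "leg V E t u \<inter> leg V E t' u' \<noteq> {}"
  then obtain z where z: "z \<in> leg V E t u" "z \<in> leg V E t' u'" by blast
  note tb = terminal_ofD[OF assms(1)] and tb' = terminal_ofD[OF assms(2)]
  let ?t1 = "P t u ! 1" and ?t1' = "P t' u' ! 1"
  have a: "adj t ?t1" and a': "adj t' ?t1'" using leg_first assms by auto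
  have zs: "z \<in> branch t ?t1" "z \<in> branch t' ?t1'" using z leg_eq_branch assms by auto
  have legnm: "\<And>w u t. terminal_of V E u t \<Longrightarrow> w \<in> leg V E t u \<Longrightarrow> \<not> major V E w"
    using terminal_tpath_not_major by (auto simp: leg_def)
  show False
  proof (cases "t = t'")
    case False
    have "t' \<notin> branch t ?t1" using legnm[OF assms(1)] leg_eq_branch[OF assms(1)] tb'(5) by blast
    then have "t \<in> set (P z t')" using tpath_through_root[OF a zs(1) tb'(2)] by blast
    then have tz: "t \<in> set (P t' z)" using tpath_rev[OF tb'(2), of z] zs by simp
    have "P t' z = t' # P ?t1' z" using tpath_into_branch[OF a' zs(2)] .
    then have "t \<in> set (P ?t1' z)" using tz False by simp
    then have "?t1' \<in> set (P t' t)" using tpath_beyond_adj[OF a' tb(2) _ tpath_into_branch[OF a' zs(2)]] zs by blast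
    then have "t \<in> branch t' ?t1'" using tb(2) by simp
    then have "t \<in> leg V E t' u'" using leg_eq_branch[OF assms(2)] by simp
    then show False using legnm[OF assms(2)] tb(5) by blast
  next
    case True
    have "?t1 = ?t1'" using branch_unique[OF a a'[folded True]] zs True by blast
    then have "leg V E t u = leg V E t u'" using leg_eq_branch assms True by simp
    moreover have "u \<in> leg V E t u" using tb tpath_props(8)[OF tb(2,1)] by (simp add: leg_def)
    ultimately have "u \<in> set (P t u')" by (simp add: leg_def)
    then have "u = t \<or> u = u'" using leaf_on_tpath_end[OF tb(4) tb(2) tb'(1)] True by simp
    then show False using tb(3) assms(3) by simp
  qed
qed


lemma tpath_nth_on_prefix:
  assumes "x \<in> V" "y \<in> V" "j \<le> i" "i < length (P x y)"
  shows "P x y ! j \<in> set (P x (P x y ! i))"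
  using tpath_to_nth[OF assms(1,2,4)] assms(3,4) by (simp add: in_set_conv_nth) (metis le_imp_less_Suc nth_take)

lemma tpath_nth_on_suffix:
  assumes "x \<in> V" "y \<in> V" "i \<le> j" "j < length (P x y)"
  shows "P x y ! j \<in> set (P (P x y ! i) y)"
proof -
  have "P (P x y ! i) y = drop i (P x y)" using tpath_from_nth[OF assms(1,2)] assms by simp
  moreover have "drop i (P x y) ! (j - i) = P x y ! j" using assms by simp
  moreover have "j - i < length (drop i (P x y))" using assms by simp
  ultimately show ?thesis by (metis nth_mem)
qed

lemma tpath_nth:
  assumes "x \<in> V" "y \<in> V" "i < length (P x y)"
  shows "P x y ! i \<in> V" "d x (P x y ! i) = i" "d (P x y ! i) y = length (P x y) - 1 - i"
proof -
  show v: "P x y ! i \<in> V" using assms tpath_props(5)[OF assms(1,2)] nth_mem by blast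
  show "d x (P x y ! i) = i" using tpath_to_nth[OF assms] assms(3) by (simp add: tdist_eq)
  show "d (P x y ! i) y = length (P x y) - 1 - i" using tpath_from_nth[OF assms] by (simp add: tdist_eq)
qed

lemma tpath_nth_adj:
  assumes "x \<in> V" "y \<in> V" "Suc i < length (P x y)"
  shows "adj (P x y ! i) (P x y ! Suc i)"
  using successively_nth[OF tpath_props(6)[OF assms(1,2)] assms(3)] .

lemma tdist_lt_beyond_edge:
  assumes ca: "adj c a" and w: "w \<in> branch c a" and xV: "x \<in> V" and yV: "y \<in> V"
    and cy: "c \<in> set (P a y)" and le: "d x a \<le> d c y"
  shows "d x w < d y w"
proof -
  have aV: "a \<in> V" and wV: "w \<in> V" using adj_in_V ca w by auto
  have "d w y = d w a + 1 + d c y" using tdist_across_edge(1)[OF ca wV yV _ cy] w by simp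
  moreover have "d x w \<le> d x a + d a w" using tdist_triangle[OF xV aV wV] .
  ultimately show ?thesis using le tdist_commute[OF yV wV] tdist_commute[OF aV wV] by simp
qed

lemma equidistant_tdist_even:
  assumes xV: "x \<in> V" and yV: "y \<in> V" and wV: "w \<in> V" and eq: "d x w = d y w"
  shows "even (d x y)"
proof (rule ccontr)
  assume "odd (d x y)"
  then obtain k where "d x y = Suc (2 * k)" by (metis oddE Suc_eq_plus1 add.commute)
  then have k: "length (P x y) = Suc (Suc (2 * k))" using length_tpath[OF xV yV] by simp
  let ?p = "P x y ! k" and ?q = "P x y ! Suc k"
  have kl: "Suc k < length (P x y)" using k by simp
  have apq: "adj ?p ?q" using tpath_nth_adj[OF xV yV kl] .
  have pV: "?p \<in> V" and qV: "?q \<in> V" using tpath_nth(1)[OF xV yV] kl by auto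
  have dxp: "d ?p x = k" using tpath_nth(2)[OF xV yV] kl tdist_commute[OF xV pV] by simp
  have dqy: "d ?q y = k" using tpath_nth(3)[OF xV yV kl] k by simp
  have px: "?p \<in> set (P ?q x)"
    using tpath_nth_on_prefix[OF xV yV _ kl, of k] tpath_rev[OF xV qV] by simp
  have qy: "?q \<in> set (P ?p y)" using tpath_nth_on_suffix[OF xV yV _ kl, of k] by simp
  consider "w \<in> branch ?p ?q" | "w \<in> branch ?q ?p" using adj_on_tpath_cases[OF apq wV] wV by blast
  then show False
  proof cases
    case 1
    then have "d y w < d x w"
      using tdist_lt_beyond_edge[OF apq 1 yV xV px] dxp dqy tdist_commute[OF qV yV] by simp
    then show False using eq by simp
  next
    case 2
    then have "d x w < d y w"
      using tdist_lt_beyond_edge[OF adj_sym[OF apq] 2 xV yV qy] dxp dqy tdist_commute[OF xV pV] by simp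
    then show False using eq by simp
  qed
qed

lemma equidistant_midpoint:
  assumes xV: "x \<in> V" and yV: "y \<in> V" and xy: "x \<noteq> y" and WV: "W \<subseteq> V" and Wne: "W \<noteq> {}"
    and eq: "\<forall>w\<in>W. d x w = d y w"
  shows "\<exists>c a b. adj c a \<and> adj c b \<and> a \<noteq> b \<and> x \<in> branch c a \<and> y \<in> branch c b \<and>
            d c x = d c y \<and> W \<inter> branch c a = {} \<and> W \<inter> branch c b = {}"
proof -
  let ?Q = "P x y"
  obtain w0 where "w0 \<in> W" using Wne by blast
  then have "even (d x y)" using equidistant_tdist_even[OF xV yV] eq WV by blast
  then obtain k where "d x y = 2 * k" by (rule evenE)
  then have k: "length ?Q = Suc (2 * k)" using length_tpath[OF xV yV] by simp
  have k1: "1 \<le> k" using k tpath_second(1)[OF xV yV xy] by simp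
  let ?c = "?Q ! k" and ?a = "?Q ! (k - 1)" and ?b = "?Q ! Suc k"
  have kl: "Suc k < length ?Q" and kl': "k < length ?Q" using k k1 by simp_all
  have aca: "adj ?c ?a" using tpath_nth_adj[OF xV yV, of "k - 1"] kl k1 by (simp add: insert_commute)
  have acb: "adj ?c ?b" using tpath_nth_adj[OF xV yV kl] .
  have ab: "?a \<noteq> ?b" using tpath_props(4)[OF xV yV] kl by (simp add: nth_eq_iff_index_eq)
  have cV: "?c \<in> V" and bV: "?b \<in> V" using tpath_nth(1)[OF xV yV] kl by auto
  have dcx: "d ?c x = k" using tpath_nth(2)[OF xV yV kl'] tdist_commute[OF xV cV] by simp
  have dcy: "d ?c y = k" using tpath_nth(3)[OF xV yV kl'] k by simp
  have dxa: "d x ?a = k - 1" using tpath_nth(2)[OF xV yV, of "k - 1"] kl by simp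
  have dyb: "d y ?b = k - 1"
    using tpath_nth(3)[OF xV yV kl] k tdist_commute[OF bV yV] by simp
  have xa: "x \<in> branch ?c ?a"
    using tpath_nth_on_prefix[OF xV yV _ kl', of "k - 1"] tpath_rev[OF xV cV] xV by simp
  have yb: "y \<in> branch ?c ?b" using tpath_nth_on_suffix[OF xV yV _ kl, of k] yV by simp
  have cy: "?c \<in> set (P ?a y)" using tpath_nth_on_suffix[OF xV yV _ kl', of "k - 1"] by simp
  have cx: "?c \<in> set (P ?b x)"
    using tpath_nth_on_prefix[OF xV yV _ kl, of k] tpath_rev[OF xV bV] by simp
  have "W \<inter> branch ?c ?a = {}"
  proof (rule ccontr)
    assume "W \<inter> branch ?c ?a \<noteq> {}"
    then obtain w where w: "w \<in> W" "w \<in> branch ?c ?a" by blast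
    have "d x w < d y w" using tdist_lt_beyond_edge[OF aca w(2) xV yV cy] dxa dcy by simp
    then show False using eq w(1) by simp
  qed
  moreover have "W \<inter> branch ?c ?b = {}"
  proof (rule ccontr)
    assume "W \<inter> branch ?c ?b \<noteq> {}"
    then obtain w where w: "w \<in> W" "w \<in> branch ?c ?b" by blast
    have "d y w < d x w" using tdist_lt_beyond_edge[OF acb w(2) yV xV cx] dyb dcx by simp
    then show False using eq w(1) by simp
  qed
  ultimately show ?thesis
    using aca acb ab xa yb dcx dcy by (intro exI[of _ ?c] exI[of _ ?a] exI[of _ ?b]) simp
qed

lemma nbr_of_non_major:
  assumes "c \<in> V" "\<not> major V E c" "adj c a" "adj c b" "a \<noteq> b" "adj c q"
  shows "q = a \<or> q = b"
  using major_if_three_nbrs[OF assms(1) assms(3) assms(4) assms(6) assms(5)] assms(2) by blast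

lemma terminal_in_major_free_branch:
  assumes a: "adj c a" and mc: "major V E c" and nm: "\<forall>w\<in>branch c a. \<not> major V E w"
    and z: "z \<in> branch c a" and l: "leaf V E l" and zl: "z \<in> set (P c l)"
  shows "terminal_of V E l c" "l \<in> branch c a" "z \<in> leg V E c l"
proof -
  have cV: "c \<in> V" and aV: "a \<in> V" using adj_in_V a by auto
  have lV: "l \<in> V" using l by (simp add: leaf_def)
  have zV: "z \<in> V" using z by simp
  have "P c l = P c z @ tl (P z l)" using tpath_split(1)[OF cV lV zl] .
  moreover have "P c z = c # P a z" using tpath_into_branch[OF a z] .
  ultimately have "a \<in> set (P c l)" using tpath_props(7)[OF aV zV] by simp
  then show ls: "l \<in> branch c a" using lV by simp
  have "z \<noteq> c" using z root_notin_branch[OF a] by blast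
  then show "z \<in> leg V E c l" using zl by (simp add: leg_def)
  have ac: "a \<in> set (P c l)" using ls by simp
  have dlc: "d l c = d l a + 1" using tdist_across_edge(1)[OF a lV cV ac] tpath_props(8)[OF aV cV] tdist_refl[OF cV] by simp
  show "terminal_of V E l c"
    unfolding terminal_of_def
  proof (intro conjI allI impI)
    show "leaf V E l" "major V E c" using l mc by auto
    fix w assume w: "major V E w \<and> w \<noteq> c"
    have wV: "w \<in> V" using w by (simp add: major_def)
    have "w \<notin> branch c a" using nm w by blast
    then have "c \<in> set (P a w)" using notin_branch[OF a wV] by blast
    then have "d l w = d l a + 1 + d c w" using tdist_across_edge(1)[OF a lV wV ac] by blast
    moreover have "d c w \<noteq> 0" using tdist_eq_0D[OF cV wV] w by auto
    ultimately show "d l c < d l w" using dlc by simp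
  qed
qed

lemma two_terminals_if_far_branches_major_free:
  assumes mv: "major V E v" and rV: "r \<in> V"
    and hyp: "\<And>p w. adj v p \<Longrightarrow> r \<notin> branch v p \<Longrightarrow> w \<in> branch v p \<Longrightarrow> \<not> major V E w"
  shows "\<exists>l1 l2. l1 \<noteq> l2 \<and> terminal_of V E l1 v \<and> terminal_of V E l2 v"
proof -
  have vV: "v \<in> V" using mv by (simp add: major_def)
  let ?X = "{p \<in> nbrs v. r \<in> branch v p}"
  have X1: "card ?X \<le> 1"
  proof -
    have "\<forall>p\<in>?X. \<forall>q\<in>?X. p = q" using branch_unique adj_sym by blast
    then show ?thesis using card_le_Suc0_iff_eq[of ?X] finite_nbrs by simp
  qed
  have "3 \<le> card (nbrs v)" using mv by (simp add: major_def degree_eq_card_nbrs)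
  moreover have "card (nbrs v - ?X) = card (nbrs v) - card ?X"
    using finite_nbrs by (intro card_Diff_subset) auto
  ultimately have "\<not> card (nbrs v - ?X) \<le> Suc 0" using X1 by linarith
  then have "\<not> (\<forall>p1\<in>nbrs v - ?X. \<forall>p2\<in>nbrs v - ?X. p1 = p2)"
    using card_le_Suc0_iff_eq[of "nbrs v - ?X"] finite_nbrs by simp
  then obtain p1 p2 where p: "p1 \<in> nbrs v - ?X" "p2 \<in> nbrs v - ?X" "p1 \<noteq> p2" by blast
  have terminal_beyond: "\<exists>l. terminal_of V E l v \<and> l \<in> branch v p" if pp: "p \<in> nbrs v - ?X" for p
  proof -
    have ap: "adj v p" using pp adj_sym by auto
    have pV: "p \<in> V" "v \<noteq> p" using adj_in_V ap by auto
    obtain l where l: "leaf V E l" "p \<in> set (P v l)" using leaf_beyond[OF vV pV] by blast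
    have "r \<notin> branch v p" using pp rV by auto
    then have nm: "\<forall>w\<in>branch v p. \<not> major V E w" using hyp[OF ap] by blast
    have ps: "p \<in> branch v p" using tpath_props(8)[OF vV pV(1)] pV by simp
    show ?thesis using terminal_in_major_free_branch(1,2)[OF ap mv nm ps l] by blast
  qed
  obtain l1 where l1: "terminal_of V E l1 v" "l1 \<in> branch v p1" using terminal_beyond[OF p(1)] by blast
  obtain l2 where l2: "terminal_of V E l2 v" "l2 \<in> branch v p2" using terminal_beyond[OF p(2)] by blast
  have "l1 \<noteq> l2"
  proof
    assume "l1 = l2"
    then have "p1 = p2" using branch_unique[of v p1 p2 l1] l1 l2 p adj_sym by auto
    then show False using p by simp
  qed
  then show ?thesis using l1 l2 by blast
qed

lemma exists_major_with_two_terminals: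
  assumes np: "\<not> is_path_graph V E"
  shows "\<exists>v l1 l2. l1 \<noteq> l2 \<and> terminal_of V E l1 v \<and> terminal_of V E l2 v"
proof -
  obtain r where r: "r \<in> V" "major V E r" using path_graph_if_no_major np by blast
  let ?M = "{w \<in> V. major V E w}"
  have fM: "finite ?M" using finite_V by simp
  obtain v where v: "v \<in> ?M" and vmax: "\<forall>w\<in>?M. d r w \<le> d r v"
    using finite_ex_greatest[OF fM, where f="d r"] r by blast
  have vV: "v \<in> V" and mv: "major V E v" using v by auto
  have hyp: "\<not> major V E w" if ap: "adj v p" and nr: "r \<notin> branch v p" and w: "w \<in> branch v p" for p w
  proof
    assume mw: "major V E w"
    have wV: "w \<in> V" using w by simp
    have "v \<in> set (P p r)" using notin_branch[OF ap r(1) nr] .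
    then have "d w r = d w p + 1 + d v r" using tdist_across_edge(1)[OF ap wV r(1)] w by blast
    then have "d r v < d r w" using tdist_commute[OF r(1) wV] tdist_commute[OF r(1) vV] by simp
    then show False using vmax wV mw by force
  qed
  have "\<exists>l1 l2. l1 \<noteq> l2 \<and> terminal_of V E l1 v \<and> terminal_of V E l2 v"
    by (rule two_terminals_if_far_branches_major_free[OF mv r(1)]) (rule hyp)
  then show ?thesis by blast
qed

lemma farthest_major_in_branches:
  assumes aca: "adj c a" and acb: "adj c b" and ab: "a \<noteq> b"
    and v: "v \<in> branch c a" and mv: "major V E v"
    and vmax: "\<And>w. w \<in> branch c a \<union> branch c b \<Longrightarrow> major V E w \<Longrightarrow> d c w \<le> d c v"
  shows "\<exists>l1 l2. l1 \<noteq> l2 \<and> terminal_of V E l1 v \<and> terminal_of V E l2 v"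
    "\<And>l. terminal_of V E l v \<Longrightarrow> l \<in> branch c a \<union> branch c b"
proof -
  have cV: "c \<in> V" and vV: "v \<in> V" using adj_in_V aca v by auto
  have cv: "c \<noteq> v" using v root_notin_branch[OF aca] by blast
  have hyp: "\<not> major V E w" if ap: "adj v p" and nr: "c \<notin> branch v p" and w: "w \<in> branch v p" for p w
  proof
    assume mw: "major V E w"
    have wV: "w \<in> V" using w by simp
    have vp: "v \<in> set (P p c)" using notin_branch[OF ap cV nr] .
    have pw: "p \<in> set (P v w)" using w by simp
    have dd: "d w c = d w p + 1 + d v c" using tdist_across_edge(1)[OF ap wV cV pw vp] .
    have vw: "v \<in> set (P w c)" using tdist_across_edge(2)[OF ap wV cV pw vp] .
    then have "v \<in> set (P c w)" using tpath_rev[OF wV cV] by simp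
    then have "P c w = P c v @ tl (P v w)" using tpath_split(1)[OF cV wV] by blast
    moreover have "P c v = c # P a v" using tpath_into_branch[OF aca v] .
    moreover have "a \<in> set (P a v)" using tpath_props(7) adj_in_V(2)[OF aca] vV by blast
    ultimately have "w \<in> branch c a" using wV by simp
    then have "d c w \<le> d c v" using vmax mw by blast
    then show False using dd tdist_commute[OF cV wV] tdist_commute[OF cV vV] by simp
  qed
  show "\<exists>l1 l2. l1 \<noteq> l2 \<and> terminal_of V E l1 v \<and> terminal_of V E l2 v" by (rule two_terminals_if_far_branches_major_free[OF mv cV]) (rule hyp)
  fix l assume lt: "terminal_of V E l v"
  show "l \<in> branch c a \<union> branch c b"
  proof (rule ccontr)
    assume nl: "l \<notin> branch c a \<union> branch c b"
    have lV: "l \<in> V" using terminal_ofD(1)[OF lt] .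
    have "c \<in> set (P a l)" using notin_branch[OF aca lV] nl by blast
    then have "c \<in> set (P v l)" using tdist_across_edge(2)[OF aca vV lV] v by blast
    then have ncm: "\<not> major V E c" using terminal_tpath_not_major[OF lt] cv by blast
    have "2 \<le> degree V E c" using degree_ge_2_if_two_nbrs[OF cV aca acb ab] .
    then have lc: "l \<noteq> c" using terminal_ofD(4)[OF lt] by (auto simp: leaf_def)
    let ?q = "P c l ! 1"
    have q: "adj c ?q" "l \<in> branch c ?q" using tpath_second[OF cV lV lc[symmetric]] by auto
    have "?q = a \<or> ?q = b" using nbr_of_non_major[OF cV ncm aca acb ab q(1)] .
    then show False using q(2) nl by auto
  qed
qed

lemma no_major_if_branches_and_center_non_major:
  assumes aca: "adj c a" and acb: "adj c b" and ab: "a \<noteq> b" and ncm: "\<not> major V E c"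
    and nm: "\<forall>w\<in>branch c a \<union> branch c b. \<not> major V E w"
  shows "\<forall>w\<in>V. \<not> major V E w"
proof
  fix w assume wV: "w \<in> V"
  have cV: "c \<in> V" using adj_in_V aca by auto
  show "\<not> major V E w"
  proof (cases "w = c")
    case True then show ?thesis using ncm by simp
  next
    case False
    let ?q = "P c w ! 1"
    have q: "adj c ?q" "w \<in> branch c ?q" using tpath_second[OF cV wV False[symmetric]] by auto
    have "?q = a \<or> ?q = b" using nbr_of_non_major[OF cV ncm aca acb ab q(1)] .
    then show ?thesis using q(2) nm by auto
  qed
qed

text \<open>The first vertices of any two legs are both at signed distance 1.\<close>

lemma no_special_if_unsigned:
  assumes "sdist V E \<tau> = (\<lambda>u v. int (d u v))"
  shows "\<not> special V E \<tau> t"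
proof
  assume "special V E \<tau> t"
  then obtain n m where n: "terminal_of V E n t" and m: "terminal_of V E m t"
    and separated: "\<forall>i x y. x \<in> leg V E t n \<and> y \<in> leg V E t m \<and> d t x = i \<and> d t y = i \<longrightarrow>
        sdist V E \<tau> t x \<noteq> sdist V E \<tau> t y"
    unfolding special_def by blast
  show False
    using separated[rule_format, of "P t n ! 1" "P t m ! 1" 1] leg_first[OF n] leg_first[OF m] assms by simp
qed

end

section \<open>Signed distances\<close>

locale signed_tree = tree_graph +
  fixes \<sigma> :: "'a set \<Rightarrow> int"
  assumes sig: "signature E \<sigma>"
begin

abbreviation "sg u v \<equiv> path_sign \<sigma> (P u v)"
abbreviation "sd u v \<equiv> sdist V E \<sigma> u v"

lemma sg_unit: "u \<in> V \<Longrightarrow> v \<in> V \<Longrightarrow> sg u v = 1 \<or> sg u v = -1"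
  using path_sign_unit[OF sig tpath_props(6)] by blast

lemma sg_commute: "u \<in> V \<Longrightarrow> v \<in> V \<Longrightarrow> sg v u = sg u v"
  by (simp only: tpath_rev[of u v] path_sign_rev)

lemma sd_eq: "sd u v = sg u v * int (d u v)" by (simp add: sdist_def)

lemma abs_sd: "u \<in> V \<Longrightarrow> v \<in> V \<Longrightarrow> \<bar>sd u v\<bar> = int (d u v)"
  using sg_unit[of u v] by (auto simp: sd_eq abs_mult)

lemma sd_split:
  assumes "u \<in> V" "v \<in> V" "w \<in> set (P u v)"
  shows "sd u v = sg u w * sg w v * (int (d u w) + int (d w v))"
proof -
  have wV: "w \<in> V" using assms tpath_props(5)[OF assms(1,2)] by auto
  have "sg u v = sg u w * sg w v"
    using tpath_split(1)[OF assms] path_sign_concat[of "P u w" "P w v" \<sigma>]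
      tpath_props(1,2,3)[OF assms(1) wV] tpath_props(1,2)[OF wV assms(2)] by simp
  moreover have "d u v = d u w + d w v" using tpath_split(2)[OF assms] .
  ultimately show ?thesis by (simp add: sd_eq)
qed

lemma sd_through_eq_iff:
  assumes xV: "x \<in> V" and yV: "y \<in> V" and wV: "w \<in> V" and xt: "x \<noteq> t"
    and tx: "t \<in> set (P x w)" and ty: "t \<in> set (P y w)" and dd: "d t x = d t y"
  shows "sd x w = sd y w \<longleftrightarrow> sd t x = sd t y"
proof -
  have tV: "t \<in> V" using tx tpath_props(5)[OF xV wV] by auto
  have dxy: "d x t = d y t" using dd tdist_commute[OF tV xV] tdist_commute[OF tV yV] by simp
  have pos: "int (d y t) + int (d t w) \<noteq> 0" and dtx: "int (d t x) \<noteq> 0"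
    using tdist_eq_0D[OF xV tV] xt dxy tdist_commute[OF tV xV] by auto
  have "sg t w \<noteq> 0" using sg_unit[OF tV wV] by auto
  moreover have "sd x w = sg x t * sg t w * (int (d y t) + int (d t w))"
    using sd_split[OF xV wV tx] dxy by simp
  moreover have "sd y w = sg y t * sg t w * (int (d y t) + int (d t w))"
    using sd_split[OF yV wV ty] by simp
  ultimately have "sd x w = sd y w \<longleftrightarrow> sg x t = sg y t" using pos by simp
  also have "\<dots> \<longleftrightarrow> sd t x = sd t y"
    using sg_commute[OF tV xV] sg_commute[OF tV yV] dd dtx by (auto simp: sd_eq)
  finally show ?thesis .
qed

abbreviation "terminals t \<equiv> {u \<in> V. terminal_of V E u t}"
abbreviation "terminal_vertices \<equiv> {u. \<exists>t. terminal_of V E u t}"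
abbreviation "exterior_majors \<equiv> {t. exterior_major V E t}"

lemma finite_terminal_vertices: "finite terminal_vertices"
  using finite_V by (rule rev_finite_subset) (auto simp: terminal_of_def leaf_def)

lemma finite_exterior_majors: "finite exterior_majors"
  using finite_V by (rule rev_finite_subset) (auto simp: exterior_major_def major_def)

lemma finite_terminals: "finite (terminals t)"
  using finite_V by simp

lemma exterior_major_iff: "exterior_major V E t \<longleftrightarrow> major V E t \<and> (\<exists>u. terminal_of V E u t)"
  unfolding exterior_major_def ter_def using finite_terminals
  by (auto simp: card_gt_0_iff terminal_of_def leaf_def)

lemma terminal_of_exterior_major: "terminal_of V E u t \<Longrightarrow> t \<in> exterior_majors"
  using exterior_major_iff terminal_ofD(5) by blast

lemma sum_exterior_majors_weights:
  "(\<Sum>t\<in>exterior_majors. 1 + of_bool (t \<in> eta V E \<sigma>)) = card exterior_majors + card (eta V E \<sigma>)"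
proof -
  have "eta V E \<sigma> \<subseteq> exterior_majors" by (auto simp: eta_def special_def)
  then have "exterior_majors \<inter> {t. t \<in> eta V E \<sigma>} = eta V E \<sigma>" by blast
  moreover have "(\<Sum>t\<in>exterior_majors. 1 + of_bool (t \<in> eta V E \<sigma>)) =
      (\<Sum>t\<in>exterior_majors. 1) + (\<Sum>t\<in>exterior_majors. of_bool (t \<in> eta V E \<sigma>) :: nat)"
    by (rule sum.distrib)
  ultimately show ?thesis using finite_exterior_majors by simp
qed

section \<open>The lower bound\<close>

definition free_terminals :: "'a set \<Rightarrow> 'a \<Rightarrow> 'a set" where
  "free_terminals W t = {u. terminal_of V E u t \<and> W \<inter> leg V E t u = {}}"

lemma free_legs_separated:
  assumes res: "resolving V sd W" and u1: "u1 \<in> free_terminals W t" and u2: "u2 \<in> free_terminals W t"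
    and u12: "u1 \<noteq> u2" and x: "x \<in> leg V E t u1" and y: "y \<in> leg V E t u2" and dd: "d t x = d t y"
  shows "sd t x \<noteq> sd t y"
proof -
  have t1: "terminal_of V E u1 t" and t2: "terminal_of V E u2 t"
    and f1: "W \<inter> leg V E t u1 = {}" and f2: "W \<inter> leg V E t u2 = {}"
    using u1 u2 by (auto simp: free_terminals_def)
  note tb1 = terminal_ofD[OF t1] and tb2 = terminal_ofD[OF t2]
  have xV: "x \<in> V" using x tpath_props(5)[OF tb1(2,1)] by (auto simp: leg_def)
  have yV: "y \<in> V" using y tpath_props(5)[OF tb2(2,1)] by (auto simp: leg_def)
  have "x \<noteq> y" using legs_disjoint[OF t1 t2 u12] x y by blast
  then obtain w where w: "w \<in> W" "sd x w \<noteq> sd y w" using res xV yV unfolding resolving_def by blast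
  have wV: "w \<in> V" using w res by (auto simp: resolving_def)
  have tx: "t \<in> set (P x w)"
    using tpath_through_root[OF leg_first(1)[OF t1] _ wV] x f1 w leg_eq_branch[OF t1] by auto
  have ty: "t \<in> set (P y w)"
    using tpath_through_root[OF leg_first(1)[OF t2] _ wV] y f2 w leg_eq_branch[OF t2] by auto
  have "x \<noteq> t" using x by (simp add: leg_def)
  then show ?thesis using sd_through_eq_iff[OF xV yV wV _ tx ty dd] w(2) by blast
qed

lemma finite_free_terminals: "finite (free_terminals W t)"
  using finite_terminals by (rule rev_finite_subset) (auto simp: free_terminals_def dest: terminal_ofD(1))

text \<open>The first vertices of three free legs would have pairwise distinct signed distances \<open>\<plusminus>1\<close> from t.\<close>

lemma card_free_terminals:
  assumes res: "resolving V sd W"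
  shows "card (free_terminals W t) \<le> 1 + of_bool (t \<in> eta V E \<sigma>)"
proof (cases "t \<in> eta V E \<sigma>")
  case True
  let ?F = "free_terminals W t" and ?first = "\<lambda>u. sd t (P t u ! 1)"
  have terminal: "terminal_of V E u t" if "u \<in> ?F" for u
    using that by (simp add: free_terminals_def)
  have tV: "t \<in> V" using True by (simp add: eta_def)
  have "inj_on ?first ?F"
  proof (rule inj_onI, rule ccontr)
    fix u1 u2 assume u: "u1 \<in> ?F" "u2 \<in> ?F" and eq: "?first u1 = ?first u2" and ne: "u1 \<noteq> u2"
    note l1 = leg_first[OF terminal[OF u(1)]] and l2 = leg_first[OF terminal[OF u(2)]]
    have "?first u1 \<noteq> ?first u2" using free_legs_separated[OF res u ne l1(2) l2(2)] l1(3) l2(3) by simp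
    then show False using eq by simp
  qed
  moreover have "?first ` ?F \<subseteq> {1, -1}"
  proof (rule image_subsetI)
    fix u assume "u \<in> ?F"
    note l = leg_first[OF terminal[OF this]]
    show "?first u \<in> {1, -1}" using sg_unit[OF tV l(4)] l(3) by (auto simp: sd_eq)
  qed
  ultimately have "card ?F \<le> card {1, -1 :: int}" by (intro card_inj_on_le) auto
  then show ?thesis using True by simp
next
  case False
  have "u1 = u2" if u: "u1 \<in> free_terminals W t" "u2 \<in> free_terminals W t" for u1 u2
  proof (rule ccontr)
    assume ne: "u1 \<noteq> u2"
    have t1: "terminal_of V E u1 t" and t2: "terminal_of V E u2 t"
      using u by (simp_all add: free_terminals_def)
    have "\<forall>i x y. x \<in> leg V E t u1 \<and> y \<in> leg V E t u2 \<and> d t x = i \<and> d t y = i \<longrightarrow> sd t x \<noteq> sd t y"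
      using free_legs_separated[OF res u ne] by auto
    then have "special V E \<sigma> t"
      using ne t1 t2 terminal_of_exterior_major[OF t1] unfolding special_def
      by (intro conjI exI[of _ u1] exI[of _ u2]) auto
    then show False using False terminal_ofD(2)[OF t1] by (simp add: eta_def)
  qed
  then have "card (free_terminals W t) \<le> Suc 0"
    using card_le_Suc0_iff_eq[OF finite_free_terminals] by blast
  then show ?thesis using False by simp
qed

text \<open>Every other terminal vertex owns a vertex of W in its leg, and legs are disjoint.\<close>

lemma card_nonfree_terminals:
  assumes res: "resolving V sd W"
  shows "card (terminal_vertices - (\<Union>t\<in>exterior_majors. free_terminals W t)) \<le> card W"
proof -
  let ?N = "terminal_vertices - (\<Union>t\<in>exterior_majors. free_terminals W t)"
  have "W \<subseteq> V" using res by (simp add: resolving_def)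
  then have finW: "finite W" using finite_V by (rule finite_subset)
  have choice: "\<forall>u\<in>?N. \<exists>w. w \<in> W \<and> (\<exists>t. terminal_of V E u t \<and> w \<in> leg V E t u)"
  proof
    fix u assume u: "u \<in> ?N"
    then obtain t where t: "terminal_of V E u t" by blast
    have "u \<notin> free_terminals W t" using u terminal_of_exterior_major[OF t] by blast
    then obtain w where "w \<in> W" "w \<in> leg V E t u" using t unfolding free_terminals_def by blast
    then show "\<exists>w. w \<in> W \<and> (\<exists>t. terminal_of V E u t \<and> w \<in> leg V E t u)" using t by blast
  qed
  from bchoice[OF choice] obtain g
    where g: "\<forall>u\<in>?N. g u \<in> W \<and> (\<exists>t. terminal_of V E u t \<and> g u \<in> leg V E t u)" ..
  have "inj_on g ?N"
  proof (rule inj_onI, rule ccontr)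
    fix u u' assume u: "u \<in> ?N" and u': "u' \<in> ?N" and eq: "g u = g u'" and ne: "u \<noteq> u'"
    from g u obtain t where t: "terminal_of V E u t" "g u \<in> leg V E t u" by blast
    from g u' obtain t' where t': "terminal_of V E u' t'" "g u' \<in> leg V E t' u'" by blast
    have "g u \<in> leg V E t u \<inter> leg V E t' u'" using t(2) t'(2) eq by simp
    then show False using legs_disjoint[OF t(1) t'(1) ne] by blast
  qed
  moreover have "g ` ?N \<subseteq> W" using g by blast
  ultimately show ?thesis using finW by (rule card_inj_on_le)
qed

lemma card_resolving_lower:
  assumes res: "resolving V sd W"
  shows "card terminal_vertices \<le> card W + card exterior_majors + card (eta V E \<sigma>)"
proof -
  let ?F = "\<Union>t\<in>exterior_majors. free_terminals W t"
  have "card ?F \<le> (\<Sum>t\<in>exterior_majors. card (free_terminals W t))"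
    by (rule card_UN_le[OF finite_exterior_majors])
  also have "\<dots> \<le> (\<Sum>t\<in>exterior_majors. 1 + of_bool (t \<in> eta V E \<sigma>))"
    using card_free_terminals[OF res] by (intro sum_mono) auto
  finally have "card ?F \<le> card exterior_majors + card (eta V E \<sigma>)"
    by (simp only: sum_exterior_majors_weights)
  moreover have "card terminal_vertices \<le> card (terminal_vertices - ?F) + card ?F"
  proof -
    have finF: "finite ?F" by (intro finite_UN_I finite_exterior_majors finite_free_terminals)
    then have "card (terminal_vertices - ?F) = card terminal_vertices - card (terminal_vertices \<inter> ?F)"
      by (intro card_Diff_subset_Int) auto
    moreover have "card (terminal_vertices \<inter> ?F) \<le> card ?F" using finF by (intro card_mono) auto
    moreover have "card (terminal_vertices \<inter> ?F) \<le> card terminal_vertices"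
      using finite_terminal_vertices by (intro card_mono) auto
    ultimately show ?thesis by linarith
  qed
  ultimately show ?thesis using card_nonfree_terminals[OF res] by linarith
qed

end

section \<open>The upper bound\<close>

locale admissible_signed_tree = signed_tree +
  assumes not_path: "\<not> is_path_graph V E"
    and ter_special: "\<forall>t\<in>eta V E \<sigma>. ter V E t \<noteq> 2"
begin

definition special_pair :: "'a \<Rightarrow> 'a \<Rightarrow> 'a \<Rightarrow> bool" where
  "special_pair t n m \<longleftrightarrow> n \<noteq> m \<and> terminal_of V E n t \<and> terminal_of V E m t \<and>
     (\<forall>i x y. x \<in> leg V E t n \<and> y \<in> leg V E t m \<and> d t x = i \<and> d t y = i \<longrightarrow> sd t x \<noteq> sd t y)"

definition chosen_pair :: "'a \<Rightarrow> 'a \<times> 'a" where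
  "chosen_pair t = (SOME q. special_pair t (fst q) (snd q))"

definition omitted :: "'a \<Rightarrow> 'a set" where
  "omitted t = (if special V E \<sigma> t then {fst (chosen_pair t), snd (chosen_pair t)}
     else {SOME u. terminal_of V E u t})"

definition basis :: "'a set" where
  "basis = terminal_vertices - (\<Union>t\<in>exterior_majors. omitted t)"

lemma special_pair_sd_ne:
  "special_pair t n m \<Longrightarrow> x \<in> leg V E t n \<Longrightarrow> y \<in> leg V E t m \<Longrightarrow> d t x = d t y \<Longrightarrow> sd t x \<noteq> sd t y"
  unfolding special_pair_def by blast

lemma chosen_pair_special:
  assumes "special V E \<sigma> t"
  shows "special_pair t (fst (chosen_pair t)) (snd (chosen_pair t))"
proof -
  obtain n m where "special_pair t n m"
    using assms unfolding special_def special_pair_def by blast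
  then have "\<exists>q. special_pair t (fst q) (snd q)" by (intro exI[of _ "(n, m)"]) simp
  then show ?thesis unfolding chosen_pair_def by (rule someI_ex)
qed

lemma omitted_props:
  assumes "t \<in> exterior_majors"
  shows "omitted t \<subseteq> terminals t" "card (omitted t) = 1 + of_bool (t \<in> eta V E \<sigma>)"
proof -
  have tV: "t \<in> V" using assms by (simp add: exterior_major_def major_def)
  have "omitted t \<subseteq> terminals t \<and> card (omitted t) = 1 + of_bool (t \<in> eta V E \<sigma>)"
  proof (cases "special V E \<sigma> t")
    case True
    then show ?thesis using chosen_pair_special[OF True] terminal_ofD(1) tV
      by (auto simp: omitted_def special_pair_def eta_def)
  next
    case False
    have "\<exists>u. terminal_of V E u t" using assms exterior_major_iff by blast
    then have "terminal_of V E (SOME u. terminal_of V E u t) t" by (rule someI_ex)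
    then show ?thesis using False terminal_ofD(1) by (auto simp: omitted_def eta_def)
  qed
  then show "omitted t \<subseteq> terminals t" "card (omitted t) = 1 + of_bool (t \<in> eta V E \<sigma>)" by auto
qed

lemma basis_mem:
  assumes u: "terminal_of V E u t"
  shows "u \<in> basis \<longleftrightarrow> u \<notin> omitted t"
proof
  assume "u \<in> basis"
  then show "u \<notin> omitted t" using terminal_of_exterior_major[OF u] by (auto simp: basis_def)
next
  assume u_t: "u \<notin> omitted t"
  have "t' = t" if "t' \<in> exterior_majors" "u \<in> omitted t'" for t'
    using omitted_props(1)[OF that(1)] that(2) terminal_of_unique[OF u] by blast
  then have "u \<notin> (\<Union>t'\<in>exterior_majors. omitted t')" using u_t by blast
  then show "u \<in> basis" using u by (auto simp: basis_def)
qed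

lemma card_basis: "card basis + card exterior_majors + card (eta V E \<sigma>) = card terminal_vertices"
proof -
  let ?O = "\<Union>t\<in>exterior_majors. omitted t"
  have OU: "?O \<subseteq> terminal_vertices" using omitted_props(1) by blast
  have fin: "finite (omitted t)" if "t \<in> exterior_majors" for t
    using omitted_props(1)[OF that] finite_terminals by (rule finite_subset)
  have "omitted t \<inter> omitted t' = {}" if "t \<in> exterior_majors" "t' \<in> exterior_majors" "t \<noteq> t'" for t t'
    using omitted_props(1)[OF that(1)] omitted_props(1)[OF that(2)] terminal_of_unique that(3) by blast
  then have "card ?O = (\<Sum>t\<in>exterior_majors. card (omitted t))"
    using fin by (intro card_UN_disjoint[OF finite_exterior_majors]) auto
  also have "\<dots> = card exterior_majors + card (eta V E \<sigma>)"
    using omitted_props(2) sum_exterior_majors_weights by simp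
  finally have "card ?O = card exterior_majors + card (eta V E \<sigma>)" .
  moreover have "card basis = card terminal_vertices - card ?O"
    unfolding basis_def using finite_terminal_vertices OU by (intro card_Diff_subset) (auto intro: finite_subset)
  moreover have "card ?O \<le> card terminal_vertices" using card_mono[OF finite_terminal_vertices OU] .
  ultimately show ?thesis by simp
qed

text \<open>This is where the hypothesis \<open>ter t \<noteq> 2\<close> for special t is needed.\<close>

lemma basis_meets_terminals:
  assumes u1: "terminal_of V E u1 t" and u2: "terminal_of V E u2 t" and u12: "u1 \<noteq> u2"
  shows "\<exists>u. terminal_of V E u t \<and> u \<in> basis"
proof -
  have tE: "t \<in> exterior_majors" using terminal_of_exterior_major[OF u1] .
  have "{u1, u2} \<subseteq> terminals t" using u1 u2 terminal_ofD by auto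
  then have "card {u1, u2} \<le> card (terminals t)" by (rule card_mono[OF finite_terminals])
  then have "2 \<le> card (terminals t)" using u12 by simp
  moreover have "card (terminals t) \<noteq> 2" if "t \<in> eta V E \<sigma>"
    using ter_special that by (simp add: ter_def)
  ultimately have "card (omitted t) < card (terminals t)" using omitted_props(2)[OF tE] by auto
  have "\<not> terminals t \<subseteq> omitted t"
  proof
    assume "terminals t \<subseteq> omitted t"
    moreover have "finite (omitted t)" using omitted_props(1)[OF tE] finite_terminals by (rule finite_subset)
    ultimately have "card (terminals t) \<le> card (omitted t)" by (rule card_mono[rotated])
    then show False using \<open>card (omitted t) < card (terminals t)\<close> by simp
  qed
  then obtain u where "terminal_of V E u t" "u \<notin> omitted t" by blast
  then show ?thesis using basis_mem by blast
qed

lemma basis_subset: "basis \<subseteq> V"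
  unfolding basis_def by (auto simp: terminal_of_def leaf_def)

lemma basis_nonempty: "basis \<noteq> {}"
  using exists_major_with_two_terminals[OF not_path] basis_meets_terminals by blast

lemma basis_meets_major_branches:
  assumes ca: "adj c a" and cb: "adj c b" and ab: "a \<noteq> b"
    and major: "\<exists>w\<in>branch c a \<union> branch c b. major V E w"
  shows "basis \<inter> (branch c a \<union> branch c b) \<noteq> {}"
proof -
  let ?M = "{w \<in> branch c a \<union> branch c b. major V E w}"
  have "finite ?M" using finite_V by (rule rev_finite_subset) auto
  then obtain v where v: "v \<in> ?M" and far: "\<forall>w\<in>?M. d c w \<le> d c v"
    using finite_ex_greatest[where f="d c"] major by blast
  obtain l1 l2 where l: "l1 \<noteq> l2" "terminal_of V E l1 v" "terminal_of V E l2 v"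
    and inside: "\<And>l. terminal_of V E l v \<Longrightarrow> l \<in> branch c a \<union> branch c b"
  proof (cases "v \<in> branch c a")
    case True
    have mv: "major V E v" using v by blast
    have "\<And>w. w \<in> branch c a \<union> branch c b \<Longrightarrow> major V E w \<Longrightarrow> d c w \<le> d c v" using far by blast
    note fm = farthest_major_in_branches[OF ca cb ab True mv this]
    show ?thesis using that[OF _ _ _ fm(2)] fm(1) v by blast
  next
    case False
    then have vb: "v \<in> branch c b" using v by blast
    have mv: "major V E v" using v by blast
    have "\<And>w. w \<in> branch c b \<union> branch c a \<Longrightarrow> major V E w \<Longrightarrow> d c w \<le> d c v" using far by blast
    note fm = farthest_major_in_branches[OF cb ca ab[symmetric] vb mv this]
    have "\<And>l. terminal_of V E l v \<Longrightarrow> l \<in> branch c a \<union> branch c b" using fm(2) by blast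
    then show ?thesis using that fm(1) v by blast
  qed
  obtain l where "terminal_of V E l v" "l \<in> basis" using basis_meets_terminals[OF l(2,3,1)] by blast
  then show ?thesis using inside by blast
qed

lemma basis_separates_at_major_root:
  assumes ca: "adj c a" and cb: "adj c b" and ab: "a \<noteq> b" and mc: "major V E c"
    and no_major: "\<forall>w\<in>branch c a \<union> branch c b. \<not> major V E w"
    and x: "x \<in> branch c a" and y: "y \<in> branch c b" and dd: "d c x = d c y"
    and fa: "basis \<inter> branch c a = {}" and fb: "basis \<inter> branch c b = {}"
  shows "\<exists>w\<in>basis. sd x w \<noteq> sd y w"
proof -
  have cV: "c \<in> V" and xV: "x \<in> V" and yV: "y \<in> V" using adj_in_V ca x y by auto
  have xc: "c \<noteq> x" and yc: "c \<noteq> y" using x y root_notin_branch[OF ca] root_notin_branch[OF cb] by blast+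
  have nma: "\<forall>w\<in>branch c a. \<not> major V E w" and nmb: "\<forall>w\<in>branch c b. \<not> major V E w"
    using no_major by blast+
  obtain la where la: "leaf V E la" "x \<in> set (P c la)" using leaf_beyond[OF cV xV xc] by blast
  obtain lb where lb: "leaf V E lb" "y \<in> set (P c lb)" using leaf_beyond[OF cV yV yc] by blast
  note ta = terminal_in_major_free_branch[OF ca mc nma x la]
  note tb = terminal_in_major_free_branch[OF cb mc nmb y lb]
  have la_lb: "la \<noteq> lb" using branch_unique[OF ca cb] ta(2) tb(2) ab by blast
  have "la \<notin> basis" "lb \<notin> basis" using ta(2) tb(2) fa fb by blast+
  then have omitted: "la \<in> omitted c" "lb \<in> omitted c"
    using basis_mem[OF ta(1)] basis_mem[OF tb(1)] by blast+
  have sp: "special V E \<sigma> c"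
  proof (rule ccontr)
    assume "\<not> special V E \<sigma> c"
    then show False using omitted la_lb by (simp add: omitted_def)
  qed
  obtain n m where nm: "chosen_pair c = (n, m)" by (cases "chosen_pair c")
  then have "special_pair c n m" using chosen_pair_special[OF sp] by simp
  moreover have "{la, lb} \<subseteq> {n, m}" using omitted sp nm by (simp add: omitted_def)
  ultimately have "special_pair c la lb \<or> special_pair c lb la" using la_lb by auto
  then have sd_ne: "sd c x \<noteq> sd c y"
    using special_pair_sd_ne ta(3) tb(3) dd by metis
  obtain l where l: "terminal_of V E l c" "l \<in> basis" using basis_meets_terminals[OF ta(1) tb(1) la_lb] by blast
  have lV: "l \<in> V" using terminal_ofD(1)[OF l(1)] .
  have "l \<notin> branch c a" "l \<notin> branch c b" using l(2) fa fb by blast+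
  then have "c \<in> set (P x l)" "c \<in> set (P y l)"
    using tpath_through_root[OF ca x lV] tpath_through_root[OF cb y lV] by blast+
  then have "sd x l \<noteq> sd y l" using sd_through_eq_iff[OF xV yV lV xc[symmetric]] dd sd_ne by blast
  then show ?thesis using l(2) by blast
qed

lemma basis_resolving: "resolving V sd basis"
  unfolding resolving_def
proof (intro conjI ballI impI)
  show "basis \<subseteq> V" by (rule basis_subset)
  fix x y assume xV: "x \<in> V" and yV: "y \<in> V" and xy: "x \<noteq> y"
  show "\<exists>w\<in>basis. sd x w \<noteq> sd y w"
  proof (rule ccontr)
    assume unresolved: "\<not> (\<exists>w\<in>basis. sd x w \<noteq> sd y w)"
    have "\<forall>w\<in>basis. d x w = d y w"
    proof
      fix w assume w: "w \<in> basis"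
      have wV: "w \<in> V" using w basis_subset by blast
      have "\<bar>sd x w\<bar> = \<bar>sd y w\<bar>" using unresolved w by simp
      then show "d x w = d y w" using abs_sd[OF xV wV] abs_sd[OF yV wV] by simp
    qed
    then obtain c a b where cab: "adj c a" "adj c b" "a \<noteq> b" "x \<in> branch c a" "y \<in> branch c b"
      "d c x = d c y" "basis \<inter> branch c a = {}" "basis \<inter> branch c b = {}"
      using equidistant_midpoint[OF xV yV xy basis_subset basis_nonempty] by auto
    show False
    proof (cases "\<exists>w\<in>branch c a \<union> branch c b. major V E w")
      case True
      then show False using basis_meets_major_branches[OF cab(1-3)] cab(7,8) by blast
    next
      case False
      then have nm: "\<forall>w\<in>branch c a \<union> branch c b. \<not> major V E w" by blast
      have "major V E c"
      proof (rule ccontr)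
        assume "\<not> major V E c"
        then have "\<forall>w\<in>V. \<not> major V E w"
          by (rule no_major_if_branches_and_center_non_major[OF cab(1-3) _ nm])
        then show False using path_graph_if_no_major not_path by blast
      qed
      then show False using basis_separates_at_major_root[OF cab(1-3) _ nm cab(4-8)] unresolved by blast
    qed
  qed
qed

lemma metric_dim_signed:
  "int (metric_dim V sd) = int (card terminal_vertices) - int (card exterior_majors) - int (card (eta V E \<sigma>))"
proof -
  let ?A = "{card W | W. resolving V sd W}"
  have "?A \<subseteq> {0..card V}" using card_mono[OF finite_V] by (auto simp: resolving_def)
  then have "finite ?A" by (rule finite_subset) simp
  moreover have "card basis \<in> ?A" using basis_resolving by blast
  moreover have "\<forall>k\<in>?A. card basis \<le> k"
  proof
    fix k assume "k \<in> ?A"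
    then obtain W where "k = card W" "resolving V sd W" by blast
    then show "card basis \<le> k" using card_resolving_lower card_basis by fastforce
  qed
  ultimately have "metric_dim V sd = card basis" unfolding metric_dim_def by (intro Min_eqI) auto
  then show ?thesis using card_basis by simp
qed

end

theorem theorem4p3:
  fixes V :: "'a set" and E :: "'a set set" and \<sigma> :: "'a set \<Rightarrow> int"
  assumes "tree V E"
    and "signature E \<sigma>"
    and "\<not> is_path_graph V E"
    and "\<forall>t \<in> eta V E \<sigma>. ter V E t \<noteq> 2"
  shows "int (dim_signed V E \<sigma>) = int (dim_tree V E) - int (card (eta V E \<sigma>))"
proof -
  interpret signed: admissible_signed_tree V E \<sigma> using assms by unfold_locales
  have unsigned_sdist: "sdist V E (\<lambda>_. 1) = (\<lambda>u v. int (tdist V E u v))"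
    by (intro ext) (simp add: sdist_def path_sign_const_1)
  have "eta V E (\<lambda>_. 1) = {}"
    using signed.no_special_if_unsigned unsigned_sdist by (auto simp: eta_def)
  then interpret unsigned: admissible_signed_tree V E "\<lambda>_. 1"
    using assms(1,3) by unfold_locales (auto simp: signature_def)
  have "int (dim_tree V E) = int (card signed.terminal_vertices) - int (card signed.exterior_majors)"
    using unsigned.metric_dim_signed \<open>eta V E (\<lambda>_. 1) = {}\<close> unsigned_sdist by (simp add: dim_tree_def)
  then show ?thesis using signed.metric_dim_signed by (simp add: dim_signed_def)
qed

end
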